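(* In the two-unicast setting, suppose $k_{1-2}+k_{2-1}\le\min(k_{12-1},k_{12-2})$. Then every pair of nonnegative integers $(R_1,R_2)$ with $$R_1\le k_{12-1}-k_{2-1},\qquad R_2\le k_{12-2}-k_{1-2}$$ is achievable.
   Context: $G=(V,E)$ is a directed acyclic network with unit-capacity edges (each carrying one symbol of $GF(q)$ per use), sources $s_1,s_2$ (no incoming edges) and terminals $t_1,t_2$ (no outgoing edges); $t_i$ wants the message of $s_i$. For $N_1,N_2\subseteq\{1,2\}$, $k_{N_1-N_2}$ is the minimum cut from $\{s_i:i\in N_1\}$ to $\{t_j:j\in N_2\}$. A linear network code over $GF(q)$: symbols on edges leaving a non-source node are $GF(q)$-linear combinations of the node's incoming symbols; symbols on edges leaving $s_i$ are $GF(q)$-linear combinations of $s_i$'s message symbols. $(R_1,R_2)$ is achievable if for some finite field $GF(q)$ there is a linear network code such that, when $s_i$ observes $R_i$ independent symbols of $GF(q)$, $t_1$ uniquely recovers $s_1$'s message and $t_2$ uniquely recovers $s_2$'s message (neither terminal needs to recover the other source). *)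

theory Defs
  imports "HOL-Algebra.Ring"
begin

text \<open>A network is given by a finite set E of edges (of an arbitrary type, so parallel
  edges are allowed), each edge e going from tail e to head e and carrying one field symbol.\<close>

definition edge_rel :: "'e set \<Rightarrow> ('e \<Rightarrow> 'v) \<Rightarrow> ('e \<Rightarrow> 'v) \<Rightarrow> ('v \<times> 'v) set" where
  "edge_rel E tail head = {(tail e, head e) | e. e \<in> E}"

definition is_cut :: "'e set \<Rightarrow> ('e \<Rightarrow> 'v) \<Rightarrow> ('e \<Rightarrow> 'v) \<Rightarrow> 'v set \<Rightarrow> 'v set \<Rightarrow> 'e set \<Rightarrow> bool" where
  "is_cut E tail head S T C \<longleftrightarrow> C \<subseteq> E \<and>
     (\<forall>s\<in>S. \<forall>t\<in>T. (s, t) \<notin> (edge_rel (E - C) tail head)\<^sup>*)"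

definition mincut :: "'e set \<Rightarrow> ('e \<Rightarrow> 'v) \<Rightarrow> ('e \<Rightarrow> 'v) \<Rightarrow> 'v set \<Rightarrow> 'v set \<Rightarrow> nat" where
  "mincut E tail head S T = Min (card ` {C. is_cut E tail head S T C})"

definition two_unicast_net ::
  "'e set \<Rightarrow> ('e \<Rightarrow> 'v) \<Rightarrow> ('e \<Rightarrow> 'v) \<Rightarrow> 'v \<Rightarrow> 'v \<Rightarrow> 'v \<Rightarrow> 'v \<Rightarrow> bool" where
  "two_unicast_net E tail head s1 s2 t1 t2 \<longleftrightarrow>
     finite E \<and> acyclic (edge_rel E tail head) \<and>
     distinct [s1, s2, t1, t2] \<and>
     (\<forall>e\<in>E. head e \<noteq> s1 \<and> head e \<noteq> s2 \<and> tail e \<noteq> t1 \<and> tail e \<noteq> t2)"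

text \<open>y is the assignment of symbols to edges induced by the linear code (alpha, beta)
  when s1 sends x1 (R1 symbols) and s2 sends x2 (R2 symbols).
  alpha e j: coefficient of the j-th message symbol of the source tail e on edge e;
  beta e' e: coefficient of the symbol on incoming edge e' in the symbol on edge e.\<close>
definition code_edge_symbols ::
  "('k, 'm) ring_scheme \<Rightarrow> 'e set \<Rightarrow> ('e \<Rightarrow> 'v) \<Rightarrow> ('e \<Rightarrow> 'v) \<Rightarrow> 'v \<Rightarrow> 'v \<Rightarrow> nat \<Rightarrow> nat \<Rightarrow>
   ('e \<Rightarrow> nat \<Rightarrow> 'k) \<Rightarrow> ('e \<Rightarrow> 'e \<Rightarrow> 'k) \<Rightarrow> (nat \<Rightarrow> 'k) \<Rightarrow> (nat \<Rightarrow> 'k) \<Rightarrow> ('e \<Rightarrow> 'k) \<Rightarrow> bool" where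
  "code_edge_symbols K E tail head s1 s2 R1 R2 \<alpha> \<beta> x1 x2 y \<longleftrightarrow>
     (\<forall>e\<in>E. y e \<in> carrier K \<and>
        (if tail e = s1 then y e = finsum K (\<lambda>j. \<alpha> e j \<otimes>\<^bsub>K\<^esub> x1 j) {..<R1}
         else if tail e = s2 then y e = finsum K (\<lambda>j. \<alpha> e j \<otimes>\<^bsub>K\<^esub> x2 j) {..<R2}
         else y e = finsum K (\<lambda>e'. \<beta> e' e \<otimes>\<^bsub>K\<^esub> y e') {e' \<in> E. head e' = tail e}))"

definition linear_solution ::
  "('k, 'm) ring_scheme \<Rightarrow> 'e set \<Rightarrow> ('e \<Rightarrow> 'v) \<Rightarrow> ('e \<Rightarrow> 'v) \<Rightarrow> 'v \<Rightarrow> 'v \<Rightarrow> 'v \<Rightarrow> 'v \<Rightarrow>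
   nat \<Rightarrow> nat \<Rightarrow> bool" where
  "linear_solution K E tail head s1 s2 t1 t2 R1 R2 \<longleftrightarrow>
     (\<exists>\<alpha> \<beta>. (\<forall>e\<in>E. \<forall>j. \<alpha> e j \<in> carrier K) \<and> (\<forall>e'\<in>E. \<forall>e\<in>E. \<beta> e' e \<in> carrier K) \<and>
       (\<forall>x1 x2 y x1' x2' y'.
          x1 \<in> {..<R1} \<rightarrow> carrier K \<and> x2 \<in> {..<R2} \<rightarrow> carrier K \<and>
          x1' \<in> {..<R1} \<rightarrow> carrier K \<and> x2' \<in> {..<R2} \<rightarrow> carrier K \<and>
          code_edge_symbols K E tail head s1 s2 R1 R2 \<alpha> \<beta> x1 x2 y \<and>
          code_edge_symbols K E tail head s1 s2 R1 R2 \<alpha> \<beta> x1' x2' y' \<longrightarrow>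
            ((\<forall>e\<in>E. head e = t1 \<longrightarrow> y e = y' e) \<longrightarrow> (\<forall>j<R1. x1 j = x1' j)) \<and>
            ((\<forall>e\<in>E. head e = t2 \<longrightarrow> y e = y' e) \<longrightarrow> (\<forall>j<R2. x2 j = x2' j))))"

text \<open>Achievability: for some finite field (represented, up to isomorphism, with carrier
  a subset of nat) there is a linear solution.\<close>
definition achievable ::
  "'e set \<Rightarrow> ('e \<Rightarrow> 'v) \<Rightarrow> ('e \<Rightarrow> 'v) \<Rightarrow> 'v \<Rightarrow> 'v \<Rightarrow> 'v \<Rightarrow> 'v \<Rightarrow> nat \<Rightarrow> nat \<Rightarrow> bool" where
  "achievable E tail head s1 s2 t1 t2 R1 R2 \<longleftrightarrow>
     (\<exists>K :: nat ring. field K \<and> finite (carrier K) \<and>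
        linear_solution K E tail head s1 s2 t1 t2 R1 R2)"

end

theory Submission
  imports Defs "HOL-Library.Z2" "HOL-Library.Function_Algebras" "HOL-Library.Transitive_Closure_Table"
begin

(* By max-flow/min-cut with source capacities R1 and R2, each terminal t_i receives an integral flow
   of value R_i + min(R_j, k_{j-i}) from the two sources; the two rate bounds alone guarantee this.  A binary linear code is then chosen edge
   by edge in topological order so that, for both flows at once, the global coding vectors on the
   current cut through the flow paths stay linearly independent: each step only has to avoid two
   proper subspaces, which is possible even over GF(2).
   At t_i the received coding vectors then span a space of dimension at least R_i + min(R_j, k_{j-i}),
   while their projection to s_j's coordinates factors through a minimum cut from s_j to t_i and so
   has dimension at most min(R_j, k_{j-i}).  The kernel of that projection lies in the span of s_i's
   unit vectors, and counting shows it is all of it, so t_i can solve for s_i's message. *)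

section \<open>Binary vectors\<close>

(* Keep bit arithmetic algebraic instead of letting simp unfold it into xor/and. *)
declare add_bit_eq_xor [simp del] mult_bit_eq_and [simp del]

type_synonym vec = "nat \<Rightarrow> bit"

lemma uminus_vec [simp]: "- (v::vec) = v"
  by (rule ext) simp

lemma vec_add_self [simp]: "(v::vec) + v = 0"
  using right_minus[of v] by simp

lemma vec_add_self_left [simp]: "(v::vec) + (v + u) = u"
  by (simp flip: add.assoc)

lemma vec_add_eq_0_iff: "(u::vec) + v = 0 \<longleftrightarrow> u = v"
  using add_eq_0_iff[of u v] by auto

lemma sum_fun_apply: "sum (f::'i \<Rightarrow> 'a \<Rightarrow> 'b::comm_monoid_add) A x = (\<Sum>i\<in>A. f i x)"
  by (induction A rule: infinite_finite_induct) auto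

text \<open>Over GF(2) a linear combination is a sum over a subset, so the span of a family is the set
  of its subset sums, and independence says that no nonempty subfamily sums to zero.\<close>

definition span :: "('i \<Rightarrow> vec) \<Rightarrow> 'i set \<Rightarrow> vec set" where
  "span w A = sum w ` Pow A"

definition indep :: "('i \<Rightarrow> vec) \<Rightarrow> 'i set \<Rightarrow> bool" where
  "indep w A \<longleftrightarrow> (\<forall>B\<subseteq>A. B \<noteq> {} \<longrightarrow> sum w B \<noteq> 0)"

definition unitv :: "nat \<Rightarrow> vec" where
  "unitv c = (\<lambda>k. if k = c then 1 else 0)"

definition scale_vec :: "bit \<Rightarrow> vec \<Rightarrow> vec" where
  "scale_vec c v = (\<lambda>k. c * v k)"

definition proj_vec :: "nat set \<Rightarrow> vec \<Rightarrow> vec" where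
  "proj_vec J v = (\<lambda>k. if k \<in> J then v k else 0)"

lemma sum_symdiff:
  assumes "finite A" "finite B"
  shows "sum (w::'i \<Rightarrow> vec) A + sum w B = sum w ((A - B) \<union> (B - A))"
proof -
  have A: "sum w A = sum w (A \<inter> B) + sum w (A - B)" and B: "sum w B = sum w (A \<inter> B) + sum w (B - A)"
    using sum.Int_Diff[OF assms(1), of w B] sum.Int_Diff[OF assms(2), of w A] by (simp_all add: Int_commute)
  have "sum w A + sum w B = (sum w (A \<inter> B) + sum w (A \<inter> B)) + (sum w (A - B) + sum w (B - A))"
    unfolding A B by (simp only: ac_simps)
  also have "\<dots> = sum w (A - B) + sum w (B - A)"
    by (simp only: vec_add_self add_0_left)
  also have "\<dots> = sum w ((A - B) \<union> (B - A))"
    using assms by (intro sum.union_disjoint[symmetric]) auto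
  finally show ?thesis .
qed

lemma span_zero: "0 \<in> span w A"
  unfolding span_def by (rule image_eqI[of _ _ "{}"]) auto

lemma span_base: "a \<in> A \<Longrightarrow> w a \<in> span w A"
  unfolding span_def by (rule image_eqI[of _ _ "{a}"]) auto

lemma span_mono: "A \<subseteq> A' \<Longrightarrow> span w A \<subseteq> span w A'"
  unfolding span_def by auto

lemma finite_span: "finite A \<Longrightarrow> finite (span w A)"
  unfolding span_def by simp

lemma card_span_le: "finite A \<Longrightarrow> card (span w A) \<le> 2 ^ card A"
  unfolding span_def by (rule order_trans[OF card_image_le]) (simp_all add: card_Pow)

lemma span_add:
  assumes "finite A" "u \<in> span w A" "v \<in> span w A"
  shows "u + v \<in> span w A"
proof -
  obtain B1 B2 where B: "B1 \<subseteq> A" "B2 \<subseteq> A" "u = sum w B1" "v = sum w B2"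
    using assms unfolding span_def by blast
  moreover have "finite B1" "finite B2"
    using B(1,2) assms(1) by (auto intro: finite_subset)
  ultimately have "u + v = sum w ((B1 - B2) \<union> (B2 - B1))"
    by (simp add: sum_symdiff)
  then show ?thesis
    unfolding span_def using B(1,2) by blast
qed

lemma span_sum:
  assumes "finite A" "\<And>b. b \<in> B \<Longrightarrow> f b \<in> span w A"
  shows "sum f B \<in> span w A"
  using assms(2)
  by (induction B rule: infinite_finite_induct) (auto intro: span_zero span_add[OF assms(1)])

lemma scale_vec_add_left: "scale_vec (a + b) v = scale_vec a v + scale_vec b v"
  unfolding scale_vec_def by (auto simp: distrib_right)

lemma span_scale_vec: "v \<in> span w A \<Longrightarrow> scale_vec c v \<in> span w A"
  by (cases c) (simp_all add: scale_vec_def span_zero flip: zero_fun_def)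

lemma indep_subset: "indep w A \<Longrightarrow> B \<subseteq> A \<Longrightarrow> indep w B"
  unfolding indep_def by blast

lemma indep_cong:
  assumes "indep w A" "\<And>i. i \<in> A \<Longrightarrow> w' i = w i"
  shows "indep w' A"
  unfolding indep_def
proof (intro allI impI)
  fix B assume "B \<subseteq> A" "B \<noteq> {}"
  moreover from this have "sum w' B = sum w B"
    using assms(2) by (intro sum.cong) auto
  ultimately show "sum w' B \<noteq> 0"
    using assms(1) unfolding indep_def by auto
qed

lemma indep_reindex:
  assumes "inj f" "indep w (f ` S)"
  shows "indep (w \<circ> f) S"
  unfolding indep_def
proof (intro allI impI)
  fix B assume "B \<subseteq> S" "B \<noteq> {}"
  moreover have "sum (w \<circ> f) B = sum w (f ` B)"
    using assms(1) by (simp add: sum.reindex inj_on_def)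
  ultimately show "sum (w \<circ> f) B \<noteq> 0"
    using assms(2) unfolding indep_def by (metis image_is_empty image_mono)
qed

lemma card_span_indep:
  assumes "finite A" "indep w A"
  shows "card (span w A) = 2 ^ card A"
proof -
  have "inj_on (sum w) (Pow A)"
  proof (rule inj_onI)
    fix B1 B2 assume B: "B1 \<in> Pow A" "B2 \<in> Pow A" "sum w B1 = sum w B2"
    have "finite B1" "finite B2"
      using B(1,2) assms(1) by (auto intro: finite_subset)
    then have "sum w ((B1 - B2) \<union> (B2 - B1)) = sum w B1 + sum w B2"
      by (rule sum_symdiff[symmetric])
    also have "\<dots> = 0"
      using B(3) by simp
    finally have "sum w ((B1 - B2) \<union> (B2 - B1)) = 0" .
    moreover have "(B1 - B2) \<union> (B2 - B1) \<subseteq> A"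
      using B(1,2) by blast
    ultimately have "(B1 - B2) \<union> (B2 - B1) = {}"
      using assms(2) unfolding indep_def by blast
    then show "B1 = B2"
      by blast
  qed
  then show ?thesis
    unfolding span_def using assms(1) by (simp add: card_image card_Pow)
qed

lemma indep_notin_span:
  assumes "finite A" "indep w A" "p \<in> A"
  shows "w p \<notin> span w (A - {p})"
proof
  assume "w p \<in> span w (A - {p})"
  then obtain B where B: "B \<subseteq> A - {p}" "w p = sum w B"
    unfolding span_def by blast
  moreover have "finite B" "p \<notin> B"
    using B(1) assms(1) by (auto intro: finite_subset)
  ultimately have "sum w (insert p B) = 0"
    by simp
  moreover have "insert p B \<subseteq> A"
    using B(1) assms(3) by blast
  ultimately show False
    using assms(2) unfolding indep_def by blast
qed

lemma indep_insert:
  assumes "finite J" "indep w J" "x \<notin> J" "\<And>i. i \<in> J \<Longrightarrow> w' i = w i" "w' x \<notin> span w J"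
  shows "indep w' (insert x J)"
  unfolding indep_def
proof (intro allI impI)
  fix B assume B: "B \<subseteq> insert x J" "B \<noteq> {}"
  have fin: "finite B"
    using B(1) assms(1) by (auto intro: finite_subset)
  have w'_w: "sum w' (B - {x}) = sum w (B - {x})"
    using B(1) assms(4) by (intro sum.cong) auto
  show "sum w' B \<noteq> 0"
  proof (cases "x \<in> B")
    case False
    then show ?thesis
      using w'_w B assms(2) unfolding indep_def by (simp add: subset_insert)
  next
    case True
    have "sum w' B = w' x + sum w (B - {x})"
      using fin True w'_w by (simp add: sum.remove)
    moreover have "sum w (B - {x}) \<in> span w J"
      unfolding span_def using B(1) by blast
    ultimately show ?thesis
      using assms(5) by (auto simp: vec_add_eq_0_iff)
  qed
qed

text \<open>A group is never the union of two proper subgroups; this is what makes GF(2) large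
  enough for two flows at once.\<close>

lemma additive_avoids_two_add_closed:
  fixes L :: "'c::ab_group_add \<Rightarrow> vec"
  assumes add: "\<And>a b. L (a + b) = L a + L b"
    and closed1: "\<And>u v. u \<in> S1 \<Longrightarrow> v \<in> S1 \<Longrightarrow> u + v \<in> S1"
    and closed2: "\<And>u v. u \<in> S2 \<Longrightarrow> v \<in> S2 \<Longrightarrow> u + v \<in> S2"
    and "L a1 \<notin> S1" "L a2 \<notin> S2"
  shows "\<exists>c. L c \<notin> S1 \<and> L c \<notin> S2"
proof (cases "L a1 \<in> S2 \<and> L a2 \<in> S1")
  case True
  then have "L (a1 + a2) \<notin> S1 \<and> L (a1 + a2) \<notin> S2"
    using assms(4,5) closed1[of "L (a1 + a2)" "L a2"] closed2[of "L (a1 + a2)" "L a1"]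
    by (auto simp: add add.assoc add.commute[of "L a1"])
  then show ?thesis by blast
qed (use assms(4,5) in blast)

lemma sum_unitv_apply: "finite A \<Longrightarrow> sum unitv A k = (if k \<in> A then 1 else 0)"
  by (simp add: sum_fun_apply unitv_def)

lemma in_span_unitv:
  assumes "finite J" "\<And>k. k \<notin> J \<Longrightarrow> v k = 0"
  shows "v \<in> span unitv J"
proof -
  have "v = sum unitv {k\<in>J. v k = 1}"
  proof
    fix k
    show "v k = sum unitv {k\<in>J. v k = 1} k"
      using assms by (cases "k \<in> J") (auto simp: sum_unitv_apply)
  qed
  then show ?thesis
    unfolding span_def by blast
qed

lemma proj_vec_add: "proj_vec J (u + v) = proj_vec J u + proj_vec J v"
  unfolding proj_vec_def by auto

lemma proj_vec_sum: "proj_vec J (sum f A) = (\<Sum>a\<in>A. proj_vec J (f a))"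
  by (rule ext) (auto simp: proj_vec_def sum_fun_apply)

lemma proj_vec_scale_vec: "proj_vec J (scale_vec c v) = scale_vec c (proj_vec J v)"
  unfolding proj_vec_def scale_vec_def by auto

lemma card_le_card_image_mult_card_kernel:
  fixes P :: "vec \<Rightarrow> vec"
  assumes "finite U" and closed: "\<And>u v. u \<in> U \<Longrightarrow> v \<in> U \<Longrightarrow> u + v \<in> U"
    and add: "\<And>u v. P (u + v) = P u + P v"
  shows "card U \<le> card (P ` U) * card {u\<in>U. P u = 0}"
proof -
  have fiber: "card {u\<in>U. P u = z} \<le> card {u\<in>U. P u = 0}" if z: "z \<in> P ` U" for z
  proof -
    obtain u0 where u0: "u0 \<in> U" "P u0 = z"
      using z by blast
    have "inj_on (\<lambda>u. u + u0) {u\<in>U. P u = z}"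
      by (rule inj_onI) simp
    moreover have "(\<lambda>u. u + u0) ` {u\<in>U. P u = z} \<subseteq> {u\<in>U. P u = 0}"
      using u0 closed by (auto simp: add)
    ultimately show ?thesis
      using assms(1) by (intro card_inj_on_le) auto
  qed
  have "card U = card (\<Union>z\<in>P ` U. {u\<in>U. P u = z})"
    by (rule arg_cong[of _ _ card]) blast
  also have "\<dots> \<le> (\<Sum>z\<in>P ` U. card {u\<in>U. P u = z})"
    using assms(1) by (intro card_UN_le) simp
  also have "\<dots> \<le> card (P ` U) * card {u\<in>U. P u = 0}"
    using sum_bounded_above[of "P ` U", OF fiber] by simp
  finally show ?thesis .
qed

lemma proj_vec_kernel_subset_span_unitv:
  assumes "finite Jo" and supp: "\<And>f k. f \<in> T \<Longrightarrow> k \<notin> Jo \<Longrightarrow> k \<notin> Jx \<Longrightarrow> w f k = 0"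
  shows "{u \<in> span w T. proj_vec Jx u = 0} \<subseteq> span unitv Jo"
proof
  fix u assume u: "u \<in> {u \<in> span w T. proj_vec Jx u = 0}"
  then obtain B where B: "B \<subseteq> T" "u = sum w B"
    unfolding span_def by blast
  have "u k = 0" if "k \<notin> Jo" for k
  proof (cases "k \<in> Jx")
    case True
    then show ?thesis
      using u fun_cong[of "proj_vec Jx u" 0 k] unfolding proj_vec_def by auto
  next
    case False
    then show ?thesis
      using B supp that by (auto simp: sum_fun_apply intro: sum.neutral)
  qed
  then show "u \<in> span unitv Jo"
    by (intro in_span_unitv[OF assms(1)])
qed

text \<open>Counting: span w T has at least 2 ^ card S elements but at most 2 ^ q projections to the
  coordinates Jx, so the kernel of the projection has at least 2 ^ card Jo elements; as it lies in
  the span of the unit vectors of Jo, it is that span.\<close>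

lemma span_unitv_subset_span_by_counting:
  fixes w :: "'i \<Rightarrow> vec"
  assumes "finite T" "S \<subseteq> T" "indep w S" "finite Jo"
    and supp: "\<And>f k. f \<in> T \<Longrightarrow> k \<notin> Jo \<Longrightarrow> k \<notin> Jx \<Longrightarrow> w f k = 0"
    and proj: "card (proj_vec Jx ` span w T) \<le> 2 ^ q"
    and card: "card Jo + q \<le> card S"
  shows "span unitv Jo \<subseteq> span w T"
proof -
  define K where "K = {u \<in> span w T. proj_vec Jx u = 0}"
  have fin: "finite (span w T)" "finite (span unitv Jo)"
    using assms(1,4) by (simp_all add: finite_span)
  have "2 ^ (card Jo + q) \<le> (2::nat) ^ card S"
    using card by (simp add: power_increasing)
  also have "\<dots> = card (span w S)"
    using assms(3) rev_finite_subset[OF assms(1,2)] by (simp add: card_span_indep)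
  also have "\<dots> \<le> card (span w T)"
    using fin(1) assms(2) by (simp add: card_mono span_mono)
  also have "\<dots> \<le> card (proj_vec Jx ` span w T) * card K"
    unfolding K_def using fin(1) span_add[OF assms(1)] proj_vec_add
    by (rule card_le_card_image_mult_card_kernel)
  also have "\<dots> \<le> 2 ^ q * card K"
    using proj by simp
  finally have "2 ^ card Jo \<le> card K"
    by (simp add: power_add)
  moreover have "K \<subseteq> span unitv Jo"
    unfolding K_def using assms(4) supp by (rule proj_vec_kernel_subset_span_unitv)
  ultimately have "K = span unitv Jo"
    using card_seteq[OF fin(2)] card_span_le[OF assms(4), of unitv] by (meson order_trans)
  then show ?thesis
    unfolding K_def by blast
qed

definition inner_prod :: "nat \<Rightarrow> vec \<Rightarrow> vec \<Rightarrow> bit" where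
  "inner_prod n v z = (\<Sum>k<n. v k * z k)"

lemma inner_prod_sum: "inner_prod n (sum f A) z = (\<Sum>a\<in>A. inner_prod n (f a) z)"
  unfolding inner_prod_def sum_fun_apply sum_distrib_right by (rule sum.swap)

lemma inner_prod_scale_vec: "inner_prod n (scale_vec c v) z = c * inner_prod n v z"
  unfolding inner_prod_def scale_vec_def sum_distrib_left by (simp add: mult.assoc)

lemma inner_prod_unitv: "c < n \<Longrightarrow> inner_prod n (unitv c) z = z c"
proof -
  have "unitv c k * z k = (if k = c then z k else 0)" for k
    by (simp add: unitv_def)
  then show "c < n \<Longrightarrow> ?thesis"
    unfolding inner_prod_def by (simp add: sum.delta)
qed

lemma inner_prod_add_right: "inner_prod n v (z + z') = inner_prod n v z + inner_prod n v z'"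
  unfolding inner_prod_def by (simp add: distrib_left sum.distrib)

lemma coordinate_determined:
  assumes "unitv c \<in> span w T" "\<And>f. f \<in> T \<Longrightarrow> inner_prod n (w f) z = inner_prod n (w f) z'" "c < n"
  shows "z c = z' c"
proof -
  obtain B where B: "B \<subseteq> T" "unitv c = sum w B"
    using assms(1) unfolding span_def by blast
  have "z c + z' c = inner_prod n (unitv c) (z + z')"
    using assms(3) by (simp add: inner_prod_unitv)
  also have "\<dots> = (\<Sum>f\<in>B. inner_prod n (w f) z + inner_prod n (w f) z')"
    unfolding B(2) inner_prod_sum inner_prod_add_right by (simp add: sum.distrib)
  also have "\<dots> = 0"
    using B(1) assms(2) by (intro sum.neutral) auto
  finally show ?thesis
    by (simp add: add_eq_0_iff)
qed

section \<open>Minimum cuts\<close>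

lemma edge_rel_mono: "A \<subseteq> B \<Longrightarrow> edge_rel A tail head \<subseteq> edge_rel B tail head"
  unfolding edge_rel_def by auto

lemma finite_cuts: "finite E \<Longrightarrow> finite {C. is_cut E tail head S T C}"
  unfolding is_cut_def by (auto intro: rev_finite_subset[of "Pow E"])

lemma mincut_le_card:
  assumes "finite E" "is_cut E tail head S T C"
  shows "mincut E tail head S T \<le> card C"
  unfolding mincut_def using assms by (simp add: finite_cuts)

lemma mincut_attained:
  assumes "finite E" "S \<inter> T = {}"
  obtains C where "is_cut E tail head S T C" "card C = mincut E tail head S T"
proof -
  have "is_cut E tail head S T E"
    using assms(2) unfolding is_cut_def edge_rel_def by auto
  then have "mincut E tail head S T \<in> card ` {C. is_cut E tail head S T C}"
    unfolding mincut_def using assms(1) by (intro Min_in) (auto simp: finite_cuts)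
  then show ?thesis
    using that by auto
qed

lemma mincut_mono_sources:
  assumes "finite E" "S \<subseteq> S'" "S' \<inter> T = {}"
  shows "mincut E tail head S T \<le> mincut E tail head S' T"
proof -
  obtain C where "is_cut E tail head S' T C" "card C = mincut E tail head S' T"
    using mincut_attained[OF assms(1,3)] .
  moreover from this have "is_cut E tail head S T C"
    using assms(2) unfolding is_cut_def by blast
  ultimately show ?thesis
    using mincut_le_card[OF assms(1)] by metis
qed

lemma mincut_two_sources_le:
  assumes "finite E" "a \<notin> T" "b \<notin> T"
  shows "mincut E tail head {a, b} T \<le> mincut E tail head {a} T + mincut E tail head {b} T"
proof -
  obtain Ca where Ca: "is_cut E tail head {a} T Ca" "card Ca = mincut E tail head {a} T"
    using mincut_attained[OF assms(1), of "{a}" T] assms(2) by auto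
  obtain Cb where Cb: "is_cut E tail head {b} T Cb" "card Cb = mincut E tail head {b} T"
    using mincut_attained[OF assms(1), of "{b}" T] assms(3) by auto
  have "(edge_rel (E - (Ca \<union> Cb)) tail head)\<^sup>* \<subseteq> (edge_rel (E - C) tail head)\<^sup>*"
    if "C = Ca \<or> C = Cb" for C
    using that by (intro rtrancl_mono edge_rel_mono) auto
  then have "is_cut E tail head {a, b} T (Ca \<union> Cb)"
    using Ca(1) Cb(1) unfolding is_cut_def by blast
  then have "mincut E tail head {a, b} T \<le> card (Ca \<union> Cb)"
    by (rule mincut_le_card[OF assms(1)])
  also have "\<dots> \<le> card Ca + card Cb"
    by (rule card_Un_le)
  finally show ?thesis
    using Ca(2) Cb(2) by simp
qed

lemma is_cut_boundary:
  assumes "S \<subseteq> X" "T \<inter> X = {}"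
  shows "is_cut E tail head S T {e\<in>E. tail e \<in> X \<and> head e \<notin> X}"
  unfolding is_cut_def
proof (intro conjI ballI)
  fix s t assume "s \<in> S" "t \<in> T"
  have "v \<in> X" if "(s, v) \<in> (edge_rel (E - {e\<in>E. tail e \<in> X \<and> head e \<notin> X}) tail head)\<^sup>*" for v
    using that by induction (use \<open>s \<in> S\<close> assms(1) in \<open>auto simp: edge_rel_def\<close>)
  then show "(s, t) \<notin> (edge_rel (E - {e\<in>E. tail e \<in> X \<and> head e \<notin> X}) tail head)\<^sup>*"
    using \<open>t \<in> T\<close> assms(2) by blast
qed auto

lemma rtrancl_path_mono_on:
  assumes "rtrancl_path r x xs y"
    and "\<And>u v. u \<in> set (x # xs) \<Longrightarrow> v \<in> set (x # xs) \<Longrightarrow> r u v \<Longrightarrow> r' u v"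
  shows "rtrancl_path r' x xs y"
  using assms by induction (auto intro: rtrancl_path.intros)

section \<open>Flows from two capacitated sources\<close>

lemma card_filter_insert:
  assumes "finite F" "e \<notin> F"
  shows "card {x\<in>insert e F. P x} = card {x\<in>F. P x} + of_bool (P e)"
proof -
  have "{x\<in>insert e F. P x} = (if P e then insert e {x\<in>F. P x} else {x\<in>F. P x})"
    by auto
  then show ?thesis
    using assms by simp
qed

text \<open>An integral flow of unit-capacity edges is represented by the set of edges carrying it.\<close>

locale flow_network =
  fixes E :: "'e set" and tail head :: "'e \<Rightarrow> 'v" and s1 s2 t :: 'v and cap :: "'v \<Rightarrow> nat"
  assumes finite_E: "finite E"
    and distinct_ends: "distinct [s1, s2, t]"
    and head_not_source: "\<And>e. e \<in> E \<Longrightarrow> head e \<noteq> s1 \<and> head e \<noteq> s2"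
    and tail_not_sink: "\<And>e. e \<in> E \<Longrightarrow> tail e \<noteq> t"
begin

definition inflow :: "'e set \<Rightarrow> 'v \<Rightarrow> nat" where
  "inflow F v = card {e\<in>F. head e = v}"

definition outflow :: "'e set \<Rightarrow> 'v \<Rightarrow> nat" where
  "outflow F v = card {e\<in>F. tail e = v}"

definition excess :: "'e set \<Rightarrow> 'v \<Rightarrow> int" where
  "excess F v = int (inflow F v) - int (outflow F v)"

definition residual :: "'e set \<Rightarrow> 'v \<Rightarrow> 'v \<Rightarrow> bool" where
  "residual F u v \<longleftrightarrow>
     (\<exists>e\<in>E. (e \<notin> F \<and> tail e = u \<and> head e = v) \<or> (e \<in> F \<and> head e = u \<and> tail e = v))"

definition is_flow :: "'e set \<Rightarrow> bool" where
  "is_flow F \<longleftrightarrow> F \<subseteq> E \<and> (\<forall>v. v \<notin> {s1, s2, t} \<longrightarrow> inflow F v = outflow F v) \<and>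
     (\<forall>s\<in>{s1, s2}. outflow F s \<le> cap s)"

lemma excess_insert:
  assumes "finite F" "e \<notin> F"
  shows "excess (insert e F) v = excess F v + of_bool (head e = v) - of_bool (tail e = v)"
  unfolding excess_def inflow_def outflow_def card_filter_insert[OF assms] by simp

lemma excess_remove:
  assumes "finite F" "e \<in> F"
  shows "excess (F - {e}) v = excess F v - of_bool (head e = v) + of_bool (tail e = v)"
  using excess_insert[of "F - {e}" e v] assms by (simp add: insert_absorb)

lemma inflow_source: "F \<subseteq> E \<Longrightarrow> s \<in> {s1, s2} \<Longrightarrow> inflow F s = 0"
  unfolding inflow_def using head_not_source by (auto simp: card_eq_0_iff)

lemma outflow_sink: "F \<subseteq> E \<Longrightarrow> outflow F t = 0"
  unfolding outflow_def using tail_not_sink by (auto simp: card_eq_0_iff)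

lemma augment_path:
  assumes "rtrancl_path (residual F) a xs b" "distinct (a # xs)" "F \<subseteq> E"
  shows "\<exists>F' \<subseteq> E. \<forall>v. excess F' v = excess F v - of_bool (v = a) + of_bool (v = b)"
  using assms
proof (induction xs arbitrary: a F)
  case Nil
  then show ?case
    by (auto elim: rtrancl_path.cases)
next
  case (Cons c ys)
  from Cons.prems(1) have "residual F a c" and path: "rtrancl_path (residual F) c ys b"
    by (auto elim: rtrancl_path.cases)
  then obtain e where e: "e \<in> E"
    "(e \<notin> F \<and> tail e = a \<and> head e = c) \<or> (e \<in> F \<and> head e = a \<and> tail e = c)"
    unfolding residual_def by blast
  define F1 where "F1 = (if e \<in> F then F - {e} else insert e F)"
  have "finite F"
    using Cons.prems(3) finite_E by (rule finite_subset)
  then have excess_F1: "excess F1 v = excess F v - of_bool (v = a) + of_bool (v = c)" for v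
    using e(2) by (auto simp: F1_def excess_remove excess_insert)
  have "residual F1 u v" if "u \<in> set (c # ys)" "v \<in> set (c # ys)" "residual F u v" for u v
  proof -
    have "u \<noteq> a" "v \<noteq> a"
      using that(1,2) Cons.prems(2) by auto
    then show ?thesis
      using that(3) e(2) unfolding residual_def F1_def by (metis Diff_iff insert_iff singletonD)
  qed
  then have "rtrancl_path (residual F1) c ys b"
    using path by (rule rtrancl_path_mono_on[rotated])
  moreover have "distinct (c # ys)"
    using Cons.prems(2) by simp
  moreover have "F1 \<subseteq> E"
    using Cons.prems(3) e(1) by (auto simp: F1_def)
  ultimately obtain F' where "F' \<subseteq> E"
    "\<forall>v. excess F' v = excess F1 v - of_bool (v = c) + of_bool (v = b)"
    using Cons.IH by blast
  then show ?case
    using excess_F1 by auto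
qed

lemma exists_max_flow:
  obtains F where "is_flow F" "\<And>F'. is_flow F' \<Longrightarrow> inflow F' t \<le> inflow F t"
proof -
  have "is_flow {}"
    unfolding is_flow_def inflow_def outflow_def by simp
  moreover have "inflow F t < card E + 1" if "is_flow F" for F
    using that finite_E unfolding is_flow_def inflow_def by (simp add: card_mono less_Suc_eq_le subset_eq)
  ultimately obtain F where "is_flow F" "\<forall>F'. is_flow F' \<longrightarrow> inflow F' t \<le> inflow F t"
    using ex_has_greatest_nat[of is_flow "{}" "\<lambda>F. inflow F t"] by blast
  then show ?thesis
    using that by blast
qed

lemma max_flow_no_augmenting_path:
  assumes max: "is_flow F" "\<And>F'. is_flow F' \<Longrightarrow> inflow F' t \<le> inflow F t"
    and s: "s \<in> {s1, s2}" "outflow F s < cap s"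
  shows "\<not> (residual F)\<^sup>*\<^sup>* s t"
proof
  assume "(residual F)\<^sup>*\<^sup>* s t"
  then obtain xs where "rtrancl_path (residual F) s xs t"
    unfolding rtranclp_eq_rtrancl_path by blast
  then obtain xs' where "rtrancl_path (residual F) s xs' t" "distinct (s # xs')"
    by (rule rtrancl_path_distinct)
  moreover have "F \<subseteq> E"
    using max(1) unfolding is_flow_def by blast
  ultimately obtain F' where F': "F' \<subseteq> E" "\<And>v. excess F' v = excess F v - of_bool (v = s) + of_bool (v = t)"
    by (blast dest: augment_path)
  have "s \<noteq> t"
    using s(1) distinct_ends by auto
  have "is_flow F'"
    unfolding is_flow_def
  proof (intro conjI allI impI ballI)
    fix v assume "v \<notin> {s1, s2, t}"
    then show "inflow F' v = outflow F' v"
      using F'(2)[of v] max(1) s(1) unfolding is_flow_def excess_def by auto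
  next
    fix v assume v: "v \<in> {s1, s2}"
    then have "int (outflow F' v) = int (outflow F v) + of_bool (v = s)"
      using F'(1) F'(2)[of v] max(1) distinct_ends inflow_source[of F v] inflow_source[of F' v]
      unfolding is_flow_def excess_def by auto
    then show "outflow F' v \<le> cap v"
      using v s(2) max(1) unfolding is_flow_def by (cases "v = s") auto
  qed (use F'(1) in simp)
  moreover have "int (inflow F' t) = int (inflow F t) + 1"
    using F'(2)[of t] \<open>s \<noteq> t\<close> outflow_sink[OF F'(1)] outflow_sink[of F] max(1)
    unfolding is_flow_def excess_def by auto
  ultimately show False
    using max(2) by fastforce
qed

lemma sum_excess:
  assumes "finite F" "finite Y"
  shows "(\<Sum>v\<in>Y. excess F v) = int (card {e\<in>F. head e \<in> Y}) - int (card {e\<in>F. tail e \<in> Y})"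
proof -
  have "(\<Sum>v\<in>Y. card {e\<in>F. f e = v}) = card {e\<in>F. f e \<in> Y}" for f :: "'e \<Rightarrow> 'v"
  proof -
    have "card (\<Union>v\<in>Y. {e\<in>F. f e = v}) = (\<Sum>v\<in>Y. card {e\<in>F. f e = v})"
      using assms by (intro card_UN_disjoint) auto
    moreover have "(\<Union>v\<in>Y. {e\<in>F. f e = v}) = {e\<in>F. f e \<in> Y}"
      by auto
    ultimately show ?thesis
      by simp
  qed
  then show ?thesis
    unfolding excess_def inflow_def outflow_def sum_subtractf by (simp flip: of_nat_sum)
qed

lemma inflow_sink_eq_boundary:
  assumes flow: "is_flow F" and "t \<notin> X" and closed: "\<And>u v. u \<in> X \<Longrightarrow> residual F u v \<Longrightarrow> v \<in> X"
  shows "int (inflow F t) = int (card {e\<in>E. tail e \<in> X \<and> head e \<notin> X}) + (\<Sum>s\<in>{s1, s2} - X. int (outflow F s))"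
proof -
  define Y where "Y = ({s1, s2, t} \<union> head ` E \<union> tail ` E) - X"
  have FE: "F \<subseteq> E" and "finite F" "finite Y"
    using flow finite_E unfolding is_flow_def Y_def by (auto intro: finite_subset)
  define C where "C = {e\<in>E. tail e \<in> X \<and> head e \<notin> X}"
  define I where "I = {e\<in>F. head e \<notin> X \<and> tail e \<notin> X}"
  have "{e\<in>F. head e \<in> Y} = C \<union> I"
    using FE closed[of "tail _" "head _"] unfolding Y_def C_def I_def residual_def by blast
  moreover have "{e\<in>F. tail e \<in> Y} = I"
    using FE closed[of "head _" "tail _"] unfolding Y_def I_def residual_def by blast
  moreover have "card (C \<union> I) = card C + card I"
    using finite_E \<open>finite F\<close> by (intro card_Un_disjoint) (auto simp: C_def I_def)
  ultimately have "(\<Sum>v\<in>Y. excess F v) = int (card C)"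
    using sum_excess[OF \<open>finite F\<close> \<open>finite Y\<close>] by simp
  moreover have "(\<Sum>v\<in>Y. excess F v) = (\<Sum>v\<in>{t} \<union> ({s1, s2} - X). excess F v)"
    using flow \<open>finite Y\<close> \<open>t \<notin> X\<close> unfolding Y_def is_flow_def excess_def
    by (intro sum.mono_neutral_right) auto
  moreover have "(\<Sum>v\<in>{t} \<union> ({s1, s2} - X). excess F v) = excess F t + (\<Sum>s\<in>{s1, s2} - X. excess F s)"
    using distinct_ends by (subst sum.union_disjoint) auto
  moreover have "excess F t = int (inflow F t)"
    "(\<Sum>s\<in>{s1, s2} - X. excess F s) = - (\<Sum>s\<in>{s1, s2} - X. int (outflow F s))"
    using inflow_source[OF FE] outflow_sink[OF FE] by (auto simp: excess_def sum_negf intro!: sum.cong)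
  ultimately show ?thesis
    unfolding C_def by simp
qed

lemma max_flow_cut_value:
  obtains F X where "is_flow F" "t \<notin> X"
    "inflow F t = card {e\<in>E. tail e \<in> X \<and> head e \<notin> X} + (\<Sum>s\<in>{s1, s2} - X. cap s)"
proof -
  obtain F where F: "is_flow F" "\<And>F'. is_flow F' \<Longrightarrow> inflow F' t \<le> inflow F t"
    using exists_max_flow by blast
  define X where "X = {v. \<exists>s\<in>{s1, s2}. outflow F s < cap s \<and> (residual F)\<^sup>*\<^sup>* s v}"
  have "t \<notin> X"
    using max_flow_no_augmenting_path[OF F] unfolding X_def by blast
  moreover have "\<And>u v. u \<in> X \<Longrightarrow> residual F u v \<Longrightarrow> v \<in> X"
    unfolding X_def by (blast intro: rtranclp.rtrancl_into_rtrancl)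
  ultimately have "int (inflow F t) = int (card {e\<in>E. tail e \<in> X \<and> head e \<notin> X})
      + (\<Sum>s\<in>{s1, s2} - X. int (outflow F s))"
    by (rule inflow_sink_eq_boundary[OF F(1)])
  also have "(\<Sum>s\<in>{s1, s2} - X. int (outflow F s)) = (\<Sum>s\<in>{s1, s2} - X. int (cap s))"
    using F(1) unfolding is_flow_def X_def by (intro sum.cong) (auto simp: not_less intro!: antisym)
  finally show ?thesis
    using that F(1) \<open>t \<notin> X\<close> by (simp flip: of_nat_sum)
qed

theorem max_flow_min_cut:
  obtains F where "is_flow F"
    "min (min (cap s1 + cap s2) (cap s1 + mincut E tail head {s2} {t}))
       (min (cap s2 + mincut E tail head {s1} {t}) (mincut E tail head {s1, s2} {t})) \<le> inflow F t"
proof -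
  obtain F X where F: "is_flow F" "t \<notin> X"
    and flow_value: "inflow F t = card {e\<in>E. tail e \<in> X \<and> head e \<notin> X} + (\<Sum>s\<in>{s1, s2} - X. cap s)"
    by (rule max_flow_cut_value)
  have cut: "mincut E tail head S {t} \<le> card {e\<in>E. tail e \<in> X \<and> head e \<notin> X}" if "S \<subseteq> X" for S
    using that F(2) by (intro mincut_le_card finite_E is_cut_boundary) auto
  have "min (min (cap s1 + cap s2) (cap s1 + mincut E tail head {s2} {t}))
      (min (cap s2 + mincut E tail head {s1} {t}) (mincut E tail head {s1, s2} {t})) \<le> inflow F t"
  proof (cases "s1 \<in> X"; cases "s2 \<in> X")
    assume "s1 \<in> X" "s2 \<in> X"
    then show ?thesis
      using flow_value cut[of "{s1, s2}"] by (simp add: min_le_iff_disj)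
  next
    assume "s1 \<in> X" "s2 \<notin> X"
    then have "{s1, s2} - X = {s2}"
      by auto
    then show ?thesis
      using flow_value cut[of "{s1}"] \<open>s1 \<in> X\<close> by (simp add: min_le_iff_disj)
  next
    assume "s1 \<notin> X" "s2 \<in> X"
    then have "{s1, s2} - X = {s1}"
      by auto
    then show ?thesis
      using flow_value cut[of "{s2}"] \<open>s2 \<in> X\<close> by (simp add: min_le_iff_disj)
  next
    assume "s1 \<notin> X" "s2 \<notin> X"
    then have "{s1, s2} - X = {s1, s2}"
      by auto
    then show ?thesis
      using flow_value distinct_ends by (simp add: min_le_iff_disj)
  qed
  with F(1) show ?thesis
    by (rule that)
qed

end

section \<open>The field GF(2) on the carrier {0, 1}\<close>

definition GF2 :: "nat ring" where
  "GF2 = \<lparr>carrier = {0, 1}, mult = (\<lambda>a b. a * b), one = 1, zero = 0, add = (\<lambda>a b. (a + b) mod 2)\<rparr>"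

lemma GF2_simps [simp]:
  "carrier GF2 = {0, 1}" "a \<otimes>\<^bsub>GF2\<^esub> b = a * b" "\<one>\<^bsub>GF2\<^esub> = 1" "\<zero>\<^bsub>GF2\<^esub> = 0"
  "a \<oplus>\<^bsub>GF2\<^esub> b = (a + b) mod 2"
  by (simp_all add: GF2_def)

lemma cring_GF2: "cring GF2"
  by (rule cringI) (auto intro!: abelian_groupI comm_monoidI)

lemma field_GF2: "field GF2"
  by (rule cring.cring_fieldI2[OF cring_GF2]) auto

definition bit_of_nat :: "nat \<Rightarrow> bit" where
  "bit_of_nat n = of_bool (n = 1)"

definition nat_of_bit :: "bit \<Rightarrow> nat" where
  "nat_of_bit b = of_bool (b = 1)"

lemma bit_of_nat_of_bit [simp]: "bit_of_nat (nat_of_bit b) = b"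
  by (cases b) (simp_all add: bit_of_nat_def nat_of_bit_def)

lemma nat_of_bit_in_carrier [simp]: "nat_of_bit b \<in> {0, 1}"
  by (simp add: nat_of_bit_def)

lemma bit_of_nat_mult: "a \<in> {0, 1} \<Longrightarrow> b \<in> {0, 1} \<Longrightarrow> bit_of_nat (a * b) = bit_of_nat a * bit_of_nat b"
  by (auto simp: bit_of_nat_def)

lemma bit_of_nat_inject: "a \<in> {0, 1} \<Longrightarrow> b \<in> {0, 1} \<Longrightarrow> bit_of_nat a = bit_of_nat b \<longleftrightarrow> a = b"
  by (auto simp: bit_of_nat_def)

lemma bit_of_nat_finsum_GF2:
  assumes "finite A" "f \<in> A \<rightarrow> {0, 1}"
  shows "bit_of_nat (finsum GF2 f A) = (\<Sum>a\<in>A. bit_of_nat (f a))"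
proof -
  interpret cring GF2
    by (rule cring_GF2)
  show ?thesis
    using assms
  proof (induction A rule: finite_induct)
    case empty
    then show ?case
      by (simp add: bit_of_nat_def)
  next
    case (insert x A)
    have "finsum GF2 f (insert x A) = (f x + finsum GF2 f A) mod 2"
      using insert by (simp add: finsum_insert Pi_def)
    moreover have "finsum GF2 f A \<in> {0, 1}"
      using insert.prems by (metis GF2_simps(1) Pi_iff finsum_closed insertCI)
    ultimately show ?case
      using insert by (auto simp: bit_of_nat_def)
  qed
qed

section \<open>Binary network codes for two unicast sessions\<close>

locale two_unicast =
  fixes E :: "'e set" and tail head :: "'e \<Rightarrow> 'v" and s1 s2 t1 t2 :: 'v and R1 R2 :: nat
  assumes net: "two_unicast_net E tail head s1 s2 t1 t2"
begin

lemma finite_E: "finite E"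
  and acyclic_E: "acyclic (edge_rel E tail head)"
  and distinct_ends: "distinct [s1, s2, t1, t2]"
  and edge_ends: "\<And>e. e \<in> E \<Longrightarrow> head e \<noteq> s1 \<and> head e \<noteq> s2 \<and> tail e \<noteq> t1 \<and> tail e \<noteq> t2"
  using net unfolding two_unicast_net_def by auto

text \<open>Both messages form one vector: symbol j of s1 is coordinate j, symbol j of s2 is
  coordinate R1 + j.\<close>

definition msg_coords :: "'v \<Rightarrow> nat set" where
  "msg_coords s = (if s = s1 then {..<R1} else if s = s2 then {R1..<R1 + R2} else {})"

lemma finite_msg_coords: "finite (msg_coords s)"
  unfolding msg_coords_def by simp

lemma card_msg_coords: "card (msg_coords s1) = R1" "card (msg_coords s2) = R2"
  using distinct_ends unfolding msg_coords_def by auto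

lemma msg_coords_disjoint: "c \<in> msg_coords s \<Longrightarrow> c \<in> msg_coords s' \<Longrightarrow> s = s'"
  unfolding msg_coords_def by (auto split: if_splits)

definition msg_len :: "'v \<Rightarrow> nat" where
  "msg_len s = (if s = s1 then R1 else R2)"

definition coord :: "'v \<Rightarrow> nat \<Rightarrow> nat" where
  "coord s j = (if s = s1 then j else R1 + j)"

lemma msg_coords_eq_image:
  assumes "s \<in> {s1, s2}"
  shows "msg_coords s = coord s ` {..<msg_len s}"
proof -
  have "{R1..<R1 + R2} = (+) R1 ` {..<R2}"
    by (simp add: lessThan_atLeast0 add.commute)
  then show ?thesis
    using assms distinct_ends by (auto simp: msg_coords_def coord_def msg_len_def)
qed

lemma inj_coord: "inj (coord s)"
  unfolding coord_def by (rule injI) (auto split: if_splits)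

lemma coord_less: "s \<in> {s1, s2} \<Longrightarrow> j < msg_len s \<Longrightarrow> coord s j < R1 + R2"
  unfolding coord_def msg_len_def by auto

text \<open>The inputs of an edge: Inr c is message coordinate c, Inl e' the symbol on edge e'.\<close>

definition inputs :: "'e \<Rightarrow> ('e + nat) set" where
  "inputs e = (if e \<notin> E then {} else if tail e \<in> {s1, s2} then Inr ` msg_coords (tail e)
     else Inl ` {e'\<in>E. head e' = tail e})"

lemma finite_inputs: "finite (inputs e)"
  unfolding inputs_def msg_coords_def using finite_E by auto

lemma Inl_in_inputs:
  "Inl e' \<in> inputs e \<longleftrightarrow> e \<in> E \<and> e' \<in> E \<and> head e' = tail e \<and> tail e \<notin> {s1, s2}"
  unfolding inputs_def by auto

lemma Inr_in_inputs: "Inr c \<in> inputs e \<longleftrightarrow> e \<in> E \<and> tail e \<in> {s1, s2} \<and> c \<in> msg_coords (tail e)"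
  unfolding inputs_def by auto

lemma head_ne_tail: "e \<in> E \<Longrightarrow> head e \<noteq> tail e"
  using acyclic_E unfolding acyclic_def edge_rel_def by force

lemma wf_edge_rel_converse: "wf ((edge_rel E tail head)\<inverse>)"
  using finite_E acyclic_E by (intro finite_acyclic_wf_converse) (simp_all add: edge_rel_def)

definition input_rel :: "(('e + nat) \<times> ('e + nat)) set" where
  "input_rel = {(i, Inl e) | i e. i \<in> inputs e}"

lemma wf_input_rel: "wf input_rel"
proof -
  define Rl :: "(('e + nat) \<times> ('e + nat)) set" where "Rl = {(Inl e', Inl e) | e' e. Inl e' \<in> inputs e}"
  define Rr :: "(('e + nat) \<times> ('e + nat)) set" where "Rr = {(Inr c, Inl e) | c e. Inr c \<in> inputs e}"
  have "wf (edge_rel E tail head)"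
    using finite_E acyclic_E by (intro finite_acyclic_wf) (simp_all add: edge_rel_def)
  then have "wf (inv_image (edge_rel E tail head) (case_sum tail (\<lambda>_. s1)))"
    by simp
  moreover have "Rl \<subseteq> inv_image (edge_rel E tail head) (case_sum tail (\<lambda>_. s1))"
    unfolding Rl_def edge_rel_def Inl_in_inputs by force
  ultimately have "wf Rl"
    by (rule wf_subset)
  moreover have "wf Rr"
    unfolding Rr_def by (rule wf_subset[of "measure (case_sum (\<lambda>_. 1) (\<lambda>_. 0))"]) auto
  moreover have "Domain Rr \<inter> Range Rl = {}"
    unfolding Rl_def Rr_def by auto
  moreover have "input_rel = Rr \<union> Rl"
    unfolding input_rel_def Rl_def Rr_def by (auto, metis sum.exhaust)
  ultimately show ?thesis
    by (simp add: wf_Un)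
qed

text \<open>The global coding vector of every input under the local coefficients gamma:
  the symbol on an edge is this vector's inner product with the message vector.\<close>

definition coding_vec :: "(('e + nat) \<Rightarrow> 'e \<Rightarrow> bit) \<Rightarrow> ('e + nat) \<Rightarrow> vec" where
  "coding_vec \<gamma> = wfrec input_rel (\<lambda>f. case_sum (\<lambda>e. \<Sum>i\<in>inputs e. scale_vec (\<gamma> i e) (f i)) unitv)"

lemma coding_vec_Inl: "coding_vec \<gamma> (Inl e) = (\<Sum>i\<in>inputs e. scale_vec (\<gamma> i e) (coding_vec \<gamma> i))"
proof -
  have "coding_vec \<gamma> (Inl e) = (\<Sum>i\<in>inputs e. scale_vec (\<gamma> i e) (cut (coding_vec \<gamma>) input_rel (Inl e) i))"
    unfolding coding_vec_def by (subst wfrec[OF wf_input_rel]) simp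
  also have "\<dots> = (\<Sum>i\<in>inputs e. scale_vec (\<gamma> i e) (coding_vec \<gamma> i))"
    by (rule sum.cong) (auto simp: cut_apply input_rel_def)
  finally show ?thesis .
qed

lemma coding_vec_Inr [simp]: "coding_vec \<gamma> (Inr c) = unitv c"
  unfolding coding_vec_def by (subst wfrec[OF wf_input_rel]) simp

definition input_closed :: "'e set \<Rightarrow> bool" where
  "input_closed D \<longleftrightarrow> D \<subseteq> E \<and> (\<forall>e\<in>D. \<forall>e'. Inl e' \<in> inputs e \<longrightarrow> e' \<in> D)"

definition known :: "'e set \<Rightarrow> ('e + nat) set" where
  "known D = Inl ` D \<union> range Inr"

lemma inputs_subset_known: "input_closed D \<Longrightarrow> e \<in> D \<Longrightarrow> inputs e \<subseteq> known D"
  unfolding input_closed_def known_def by (auto, metis sum.exhaust rangeI image_eqI)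

lemma coding_vec_local:
  assumes "input_closed D" "\<And>e i. e \<in> D \<Longrightarrow> \<gamma>' i e = \<gamma> i e" "i \<in> known D"
  shows "coding_vec \<gamma>' i = coding_vec \<gamma> i"
  using assms(3)
proof (induction i rule: wf_induct_rule[OF wf_input_rel])
  case (1 i)
  show ?case
  proof (cases i)
    case (Inl e)
    then have "e \<in> D"
      using 1(2) unfolding known_def by auto
    then have "coding_vec \<gamma>' j = coding_vec \<gamma> j" if "j \<in> inputs e" for j
      using 1(1)[of j] that inputs_subset_known[OF assms(1)] Inl unfolding input_rel_def by blast
    then show ?thesis
      unfolding Inl coding_vec_Inl using assms(2)[OF \<open>e \<in> D\<close>] by (auto intro: sum.cong)
  qed simp
qed

text \<open>p e is the predecessor of e on its path: a routing decomposes the flow F into edge-disjoint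
  paths from message coordinates to t.\<close>

definition routing :: "'e set \<Rightarrow> ('e \<Rightarrow> 'e + nat) \<Rightarrow> 'v \<Rightarrow> bool" where
  "routing F p t \<longleftrightarrow> F \<subseteq> E \<and> (\<forall>e\<in>F. p e \<in> inputs e) \<and> inj_on p F \<and>
     (\<forall>e\<in>F. \<forall>e'. p e = Inl e' \<longrightarrow> e' \<in> F) \<and> (\<forall>e\<in>F. head e \<noteq> t \<longrightarrow> (\<exists>e'\<in>F. p e' = Inl e))"

text \<open>Once the edges D are coded, each path of the routing is cut at the last input on it whose
  forwarding edge is not yet coded.\<close>

definition frontier :: "'e set \<Rightarrow> ('e \<Rightarrow> 'e + nat) \<Rightarrow> 'e set \<Rightarrow> ('e + nat) set" where
  "frontier F p D = {i \<in> Inl ` (F \<inter> D) \<union> (p ` F \<inter> range Inr). \<forall>e\<in>F \<inter> D. p e \<noteq> i}"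

lemma finite_frontier: "routing F p t \<Longrightarrow> finite (frontier F p D)"
proof -
  assume "routing F p t"
  then have "finite F"
    unfolding routing_def using finite_E by (auto intro: finite_subset)
  then show ?thesis
    unfolding frontier_def by (auto intro: rev_finite_subset[of "Inl ` F \<union> p ` F"])
qed

lemma frontier_subset_known: "frontier F p D \<subseteq> known D"
  unfolding frontier_def known_def by auto

lemma indep_coding_vec_Inr:
  assumes "finite B" "B \<subseteq> range Inr"
  shows "indep (coding_vec \<gamma>) B"
  unfolding indep_def
proof (intro allI impI)
  fix B' assume B': "B' \<subseteq> B" "B' \<noteq> {}"
  then obtain c where "Inr c \<in> B'"
    using assms(2) by blast
  moreover have "finite B'"
    using B'(1) assms(1) by (rule finite_subset)
  moreover have "coding_vec \<gamma> i c = of_bool (i = Inr c)" if i: "i \<in> B'" for i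
  proof -
    obtain c' where "i = Inr c'"
      using i B'(1) assms(2) by blast
    then show ?thesis
      by (auto simp: unitv_def)
  qed
  ultimately have "sum (coding_vec \<gamma>) B' c = 1"
    by (simp add: sum_fun_apply)
  then show "sum (coding_vec \<gamma>) B' \<noteq> 0"
    by auto
qed

lemma frontier_insert:
  assumes r: "routing F p t" and D: "input_closed D" "e \<in> E" "e \<notin> D" "inputs e \<subseteq> known D"
    and "e \<in> F"
  shows "p e \<in> frontier F p D" "Inl e \<notin> frontier F p D"
    "frontier F p (insert e D) = insert (Inl e) (frontier F p D - {p e})"
proof -
  have p_inputs: "p x \<in> inputs x" if "x \<in> F" for x
    using r that unfolding routing_def by blast
  have "p x \<noteq> Inl e" if "x \<in> F \<inter> insert e D" for x
    using p_inputs[of x] that D(1,2,3) head_ne_tail[of e]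
    unfolding input_closed_def by (auto simp: Inl_in_inputs)
  moreover have "p x \<noteq> p e" if "x \<in> F \<inter> D" for x
    using r that \<open>e \<in> F\<close> D(3) unfolding routing_def inj_on_def by blast
  moreover have "p e \<in> Inl ` (F \<inter> D) \<union> range Inr"
    using p_inputs[OF \<open>e \<in> F\<close>] D(4) r \<open>e \<in> F\<close> unfolding known_def routing_def by auto
  ultimately show "p e \<in> frontier F p D" "Inl e \<notin> frontier F p D"
    "frontier F p (insert e D) = insert (Inl e) (frontier F p D - {p e})"
    using \<open>e \<in> F\<close> D(3) unfolding frontier_def by auto
qed

lemma frontier_insert_not_in_flow: "e \<notin> F \<Longrightarrow> frontier F p (insert e D) = frontier F p D"
  unfolding frontier_def by auto

lemma indep_frontier_insert:
  assumes r: "routing F p t" and D: "input_closed D" "e \<in> E" "e \<notin> D" "inputs e \<subseteq> known D"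
    and indep: "indep (coding_vec \<gamma>) (frontier F p D)"
    and local: "\<And>i. i \<in> known D \<Longrightarrow> coding_vec \<gamma>' i = coding_vec \<gamma> i"
    and new: "e \<in> F \<Longrightarrow> coding_vec \<gamma>' (Inl e) \<notin> span (coding_vec \<gamma>) (frontier F p D - {p e})"
  shows "indep (coding_vec \<gamma>') (frontier F p (insert e D))"
proof (cases "e \<in> F")
  case True
  note frontier = frontier_insert[OF r D True]
  have "indep (coding_vec \<gamma>') (insert (Inl e) (frontier F p D - {p e}))"
  proof (rule indep_insert)
    show "indep (coding_vec \<gamma>) (frontier F p D - {p e})"
      using indep by (rule indep_subset) auto
  qed (use finite_frontier[OF r] frontier(2) frontier_subset_known[of F p D] local new[OF True] in auto)
  then show ?thesis
    using frontier(3) by simp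
next
  case False
  have "indep (coding_vec \<gamma>') (frontier F p D)"
    using indep by (rule indep_cong) (use frontier_subset_known local in blast)
  then show ?thesis
    using False by (simp add: frontier_insert_not_in_flow)
qed

lemma coding_vec_update_edge:
  assumes "input_closed D" "e \<notin> D" "inputs e \<subseteq> known D"
  shows "i \<in> known D \<Longrightarrow> coding_vec (\<lambda>i x. if x = e then col i else \<gamma> i x) i = coding_vec \<gamma> i"
    and "coding_vec (\<lambda>i x. if x = e then col i else \<gamma> i x) (Inl e)
      = (\<Sum>i\<in>inputs e. scale_vec (col i) (coding_vec \<gamma> i))"
proof -
  let ?\<gamma>' = "\<lambda>i x. if x = e then col i else \<gamma> i x"
  show local: "coding_vec ?\<gamma>' i = coding_vec \<gamma> i" if "i \<in> known D" for i
    by (rule coding_vec_local[OF assms(1) _ that]) (use assms(2) in auto)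
  show "coding_vec ?\<gamma>' (Inl e) = (\<Sum>i\<in>inputs e. scale_vec (col i) (coding_vec \<gamma> i))"
    unfolding coding_vec_Inl
  proof (rule sum.cong)
    fix i assume "i \<in> inputs e"
    then show "scale_vec (?\<gamma>' i e) (coding_vec ?\<gamma>' i) = scale_vec (col i) (coding_vec \<gamma> i)"
      using assms(3) local by auto
  qed simp
qed

lemma input_closed_remove_last:
  assumes "input_closed D" "D \<noteq> {}"
  obtains e where "e \<in> D" "input_closed (D - {e})"
proof -
  obtain z where z: "z \<in> tail ` D" "\<And>y. (y, z) \<in> (edge_rel E tail head)\<inverse> \<Longrightarrow> y \<notin> tail ` D"
    using wfE_min[OF wf_edge_rel_converse] assms(2) by (metis ex_in_conv imageI)
  then obtain e where "e \<in> D" "tail e = z"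
    by blast
  have "Inl e \<notin> inputs x" if "x \<in> D" for x
    using z(2)[of "tail x"] that \<open>tail e = z\<close> unfolding edge_rel_def Inl_in_inputs by force
  then have "input_closed (D - {e})"
    using assms(1) unfolding input_closed_def by blast
  with \<open>e \<in> D\<close> show ?thesis
    by (rule that)
qed

text \<open>The newly coded edge e needs a coding vector outside the span of the rest of each frontier it
  changes. The bad coefficient vectors form two proper subgroups: forwarding just the input that
  e carries along one flow avoids the corresponding one.\<close>

lemma extend_code_edge:
  assumes r1: "routing F1 p1 u1" and r2: "routing F2 p2 u2"
    and D: "input_closed D" "e \<in> E" "e \<notin> D" "inputs e \<subseteq> known D"
    and indep: "indep (coding_vec \<gamma>) (frontier F1 p1 D)" "indep (coding_vec \<gamma>) (frontier F2 p2 D)"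
  obtains \<gamma>' where "indep (coding_vec \<gamma>') (frontier F1 p1 (insert e D))"
    "indep (coding_vec \<gamma>') (frontier F2 p2 (insert e D))"
proof -
  define L where "L col = (\<Sum>i\<in>inputs e. scale_vec (col i) (coding_vec \<gamma> i))" for col
  define S where "S F p = (if e \<in> F then span (coding_vec \<gamma>) (frontier F p D - {p e}) else {})" for F p
  have L_add: "L (a + b) = L a + L b" for a b
    unfolding L_def by (simp add: scale_vec_add_left sum.distrib)
  have S_closed: "u + v \<in> S F p" if "routing F p t" "u \<in> S F p" "v \<in> S F p" for F p t u v
    using that finite_frontier unfolding S_def by (auto split: if_splits intro: span_add)
  have L_select: "L (\<lambda>i. of_bool (i = p e)) \<notin> S F p" if "routing F p t" "indep (coding_vec \<gamma>) (frontier F p D)" for F p t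
  proof (cases "e \<in> F")
    case True
    have "p e \<in> inputs e"
      using that(1) True unfolding routing_def by blast
    moreover have "scale_vec (of_bool (i = p e)) v = (if i = p e then v else 0)" for i v
      by (auto simp: scale_vec_def zero_fun_def)
    ultimately have "L (\<lambda>i. of_bool (i = p e)) = coding_vec \<gamma> (p e)"
      unfolding L_def using finite_inputs by (simp add: sum.delta)
    moreover have "p e \<in> frontier F p D"
      using frontier_insert(1)[OF that(1) D True] .
    ultimately show ?thesis
      using indep_notin_span[OF finite_frontier[OF that(1)] that(2)] True unfolding S_def by simp
  qed (simp add: S_def)
  obtain col where col: "L col \<notin> S F1 p1" "L col \<notin> S F2 p2"
    using additive_avoids_two_add_closed[of L, OF L_add S_closed[OF r1] S_closed[OF r2]
        L_select[OF r1 indep(1)] L_select[OF r2 indep(2)]] by blast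
  define \<gamma>' where "\<gamma>' = (\<lambda>i x. if x = e then col i else \<gamma> i x)"
  have local: "coding_vec \<gamma>' i = coding_vec \<gamma> i" if "i \<in> known D" for i
    unfolding \<gamma>'_def using D(1,3,4) that by (rule coding_vec_update_edge)
  have "coding_vec \<gamma>' (Inl e) = L col"
    unfolding \<gamma>'_def L_def using D(1,3,4) by (rule coding_vec_update_edge)
  then have new: "coding_vec \<gamma>' (Inl e) \<notin> span (coding_vec \<gamma>) (frontier F p D - {p e})"
    if "e \<in> F" "L col \<notin> S F p" for F p
    using that unfolding S_def by simp
  show ?thesis
  proof (rule that)
    show "indep (coding_vec \<gamma>') (frontier F1 p1 (insert e D))"
      using new col(1) by (intro indep_frontier_insert[OF r1 D indep(1) local])
    show "indep (coding_vec \<gamma>') (frontier F2 p2 (insert e D))"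
      using new col(2) by (intro indep_frontier_insert[OF r2 D indep(2) local])
  qed
qed

lemma exists_code_indep_frontiers:
  assumes r1: "routing F1 p1 u1" and r2: "routing F2 p2 u2"
  obtains \<gamma> where "indep (coding_vec \<gamma>) (frontier F1 p1 E)" "indep (coding_vec \<gamma>) (frontier F2 p2 E)"
proof -
  have "\<exists>\<gamma>. indep (coding_vec \<gamma>) (frontier F1 p1 D) \<and> indep (coding_vec \<gamma>) (frontier F2 p2 D)"
    if "input_closed D" for D
    using that
  proof (induction "card D" arbitrary: D)
    case 0
    then have "D = {}"
      using finite_E unfolding input_closed_def by (metis card_0_eq finite_subset)
    then have "frontier F p D \<subseteq> range Inr" for F p
      unfolding frontier_def by auto
    then show ?case
      using indep_coding_vec_Inr[OF finite_frontier[OF r1]] indep_coding_vec_Inr[OF finite_frontier[OF r2]]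
      by blast
  next
    case (Suc n)
    obtain e where e: "e \<in> D" "input_closed (D - {e})"
      using input_closed_remove_last[OF Suc.prems] Suc.hyps(2) by force
    moreover have "card (D - {e}) = n"
      using Suc.hyps(2) e(1) by simp
    ultimately obtain \<gamma> where indep: "indep (coding_vec \<gamma>) (frontier F1 p1 (D - {e}))"
      "indep (coding_vec \<gamma>) (frontier F2 p2 (D - {e}))"
      using Suc.hyps(1) by blast
    have "inputs e \<subseteq> known (D - {e})"
    proof
      fix i assume "i \<in> inputs e"
      moreover from this have "i \<noteq> Inl e"
        using head_ne_tail[of e] by (auto simp: Inl_in_inputs)
      ultimately show "i \<in> known (D - {e})"
        using inputs_subset_known[OF Suc.prems e(1)] unfolding known_def by auto
    qed
    moreover have "e \<in> E" "e \<notin> D - {e}" "insert e (D - {e}) = D"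
      using e(1) Suc.prems unfolding input_closed_def by auto
    ultimately show ?case
      using extend_code_edge[OF r1 r2 e(2) _ _ _ indep] by metis
  qed
  moreover have "input_closed E"
    unfolding input_closed_def Inl_in_inputs by blast
  ultimately show ?thesis
    using that by blast
qed

lemma frontier_E:
  assumes r: "routing F p t" and no_out: "\<And>e. e \<in> E \<Longrightarrow> tail e \<noteq> t"
  shows "frontier F p E = Inl ` {e\<in>F. head e = t}"
proof (intro equalityI subsetI)
  have "F \<subseteq> E" and p_inputs: "\<And>x. x \<in> F \<Longrightarrow> p x \<in> inputs x"
    and forwarded: "\<And>x. x \<in> F \<Longrightarrow> head x \<noteq> t \<Longrightarrow> \<exists>e\<in>F. p e = Inl x"
    using r unfolding routing_def by auto
  {
    fix i assume "i \<in> frontier F p E"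
    then obtain x where "x \<in> F" "i = Inl x" "\<forall>e\<in>F. p e \<noteq> i"
      unfolding frontier_def using \<open>F \<subseteq> E\<close> by blast
    then show "i \<in> Inl ` {e\<in>F. head e = t}"
      using forwarded by blast
  next
    fix i :: "'e + nat" assume "i \<in> Inl ` {e\<in>F. head e = t}"
    moreover have "p y \<noteq> Inl x" if "y \<in> F" "head x = t" for x y
      using p_inputs[OF that(1)] that(2) no_out[of y] by (auto simp: Inl_in_inputs)
    ultimately show "i \<in> frontier F p E"
      unfolding frontier_def using \<open>F \<subseteq> E\<close> by auto
  }
qed

lemma inj_on_forwarding_map:
  assumes "F \<subseteq> E" and no_out: "\<And>e. e \<in> E \<Longrightarrow> tail e \<noteq> t"
    and \<sigma>: "\<And>s. s \<in> {s1, s2} \<Longrightarrow> inj_on (\<sigma> s) {e\<in>F. tail e = s} \<and> \<sigma> s ` {e\<in>F. tail e = s} \<subseteq> msg_coords s"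
    and \<phi>: "\<And>v. v \<notin> {s1, s2, t} \<Longrightarrow> bij_betw (\<phi> v) {e\<in>F. tail e = v} {e\<in>F. head e = v}"
  shows "inj_on (\<lambda>e. if tail e \<in> {s1, s2} then Inr (\<sigma> (tail e) e) else Inl (\<phi> (tail e) e)) F"
proof (rule inj_onI)
  fix a b
  assume ab: "a \<in> F" "b \<in> F"
    "(if tail a \<in> {s1, s2} then Inr (\<sigma> (tail a) a) else Inl (\<phi> (tail a) a))
      = (if tail b \<in> {s1, s2} then Inr (\<sigma> (tail b) b) else Inl (\<phi> (tail b) b))"
  have tails: "tail a \<noteq> t" "tail b \<noteq> t"
    using ab(1,2) no_out \<open>F \<subseteq> E\<close> by auto
  show "a = b"
  proof (cases "tail a \<in> {s1, s2}")
    case True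
    then have b: "tail b \<in> {s1, s2}" and eq: "\<sigma> (tail a) a = \<sigma> (tail b) b"
      using ab(3) by (auto split: if_splits)
    have "\<sigma> (tail a) a \<in> msg_coords (tail a)" "\<sigma> (tail b) b \<in> msg_coords (tail b)"
      using \<sigma>[OF True] \<sigma>[OF b] ab(1,2) by blast+
    then have "tail a = tail b"
      unfolding eq by (rule msg_coords_disjoint)
    then show ?thesis
      using eq True ab(1,2) \<sigma>[of "tail a"] unfolding inj_on_def by auto
  next
    case False
    then have b: "tail b \<notin> {s1, s2}" and eq: "\<phi> (tail a) a = \<phi> (tail b) b"
      using ab(3) by (auto split: if_splits)
    have "head (\<phi> (tail a) a) = tail a" "head (\<phi> (tail b) b) = tail b"
      using \<phi>[of "tail a"] \<phi>[of "tail b"] False b tails ab(1,2) unfolding bij_betw_def by blast+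
    then have "tail a = tail b"
      using eq by simp
    then show ?thesis
      using eq False tails ab(1,2) \<phi>[of "tail a"] unfolding bij_betw_def inj_on_def by auto
  qed
qed

lemma routing_of_forwarding_maps:
  assumes "F \<subseteq> E" and no_out: "\<And>e. e \<in> E \<Longrightarrow> tail e \<noteq> t"
    and \<sigma>: "\<And>s. s \<in> {s1, s2} \<Longrightarrow> inj_on (\<sigma> s) {e\<in>F. tail e = s} \<and> \<sigma> s ` {e\<in>F. tail e = s} \<subseteq> msg_coords s"
    and \<phi>: "\<And>v. v \<notin> {s1, s2, t} \<Longrightarrow> bij_betw (\<phi> v) {e\<in>F. tail e = v} {e\<in>F. head e = v}"
  shows "routing F (\<lambda>e. if tail e \<in> {s1, s2} then Inr (\<sigma> (tail e) e) else Inl (\<phi> (tail e) e)) t"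
    (is "routing F ?p t")
proof -
  have \<phi>_in: "\<phi> (tail e) e \<in> F \<and> head (\<phi> (tail e) e) = tail e" if "e \<in> F" "tail e \<notin> {s1, s2}" for e
    using \<phi>[of "tail e"] that no_out[of e] \<open>F \<subseteq> E\<close> unfolding bij_betw_def by auto
  have "?p e \<in> inputs e" if "e \<in> F" for e
    using that \<phi>_in[OF that] \<sigma>[of "tail e"] \<open>F \<subseteq> E\<close> by (auto simp: Inl_in_inputs Inr_in_inputs)
  moreover have "e' \<in> F" if "e \<in> F" "?p e = Inl e'" for e e'
    using that \<phi>_in[of e] by (auto split: if_splits)
  moreover have "\<exists>e'\<in>F. ?p e' = Inl e" if "e \<in> F" "head e \<noteq> t" for e
  proof -
    have "head e \<notin> {s1, s2, t}"
      using that edge_ends[of e] \<open>F \<subseteq> E\<close> by auto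
    then have "e \<in> \<phi> (head e) ` {x\<in>F. tail x = head e}"
      using \<phi>[of "head e"] that(1) unfolding bij_betw_def by auto
    then obtain e' where "e' \<in> F" "tail e' = head e" "\<phi> (head e) e' = e"
      by auto
    then show ?thesis
      using \<open>head e \<notin> {s1, s2, t}\<close> by force
  qed
  ultimately show ?thesis
    using \<open>F \<subseteq> E\<close> inj_on_forwarding_map[OF assms(1,2) \<sigma> \<phi>] unfolding routing_def by blast
qed

lemma routing_exists:
  assumes "F \<subseteq> E" and no_out: "\<And>e. e \<in> E \<Longrightarrow> tail e \<noteq> t"
    and conservation: "\<And>v. v \<notin> {s1, s2, t} \<Longrightarrow> card {e\<in>F. head e = v} = card {e\<in>F. tail e = v}"
    and source: "\<And>s. s \<in> {s1, s2} \<Longrightarrow> card {e\<in>F. tail e = s} \<le> card (msg_coords s)"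
  obtains p where "routing F p t"
proof -
  have fin: "finite {e\<in>F. P e}" for P
    using \<open>F \<subseteq> E\<close> finite_E by (auto intro: finite_subset)
  have "\<forall>s. \<exists>f. s \<in> {s1, s2} \<longrightarrow> inj_on f {e\<in>F. tail e = s} \<and> f ` {e\<in>F. tail e = s} \<subseteq> msg_coords s"
    using card_le_inj[OF fin finite_msg_coords source] by blast
  from choice[OF this] obtain \<sigma> where \<sigma>:
    "\<And>s. s \<in> {s1, s2} \<Longrightarrow> inj_on (\<sigma> s) {e\<in>F. tail e = s} \<and> \<sigma> s ` {e\<in>F. tail e = s} \<subseteq> msg_coords s"
    by blast
  have "\<forall>v. \<exists>f. v \<notin> {s1, s2, t} \<longrightarrow> bij_betw f {e\<in>F. tail e = v} {e\<in>F. head e = v}"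
    using finite_same_card_bij[OF fin fin conservation[symmetric]] by blast
  from choice[OF this] obtain \<phi> where \<phi>:
    "\<And>v. v \<notin> {s1, s2, t} \<Longrightarrow> bij_betw (\<phi> v) {e\<in>F. tail e = v} {e\<in>F. head e = v}"
    by blast
  show ?thesis
    using routing_of_forwarding_maps[OF assms(1,2) \<sigma> \<phi>] by (rule that)
qed

lemma coding_vec_outside_msg_coords:
  assumes "e \<in> E" "k \<notin> msg_coords s1 \<union> msg_coords s2"
  shows "coding_vec \<gamma> (Inl e) k = 0"
  using assms(1)
proof (induction "Inl e :: 'e + nat" arbitrary: e rule: wf_induct_rule[OF wf_input_rel])
  case 1
  have "coding_vec \<gamma> i k = 0" if "i \<in> inputs e" for i
  proof (cases i)
    case (Inl e')
    then show ?thesis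
      using 1(1)[of e'] that unfolding input_rel_def by (auto simp: Inl_in_inputs)
  next
    case (Inr c)
    then show ?thesis
      using that assms(2) by (auto simp: Inr_in_inputs unitv_def)
  qed
  then show ?case
    unfolding coding_vec_Inl by (auto simp: sum_fun_apply scale_vec_def intro: sum.neutral)
qed

lemma proj_coding_vec_in_cut_span:
  assumes "C \<subseteq> E" "s \<in> {s1, s2}" "e \<in> E" "(s, tail e) \<notin> (edge_rel (E - C) tail head)\<^sup>*"
  shows "proj_vec (msg_coords s) (coding_vec \<gamma> (Inl e)) \<in> span (proj_vec (msg_coords s) \<circ> coding_vec \<gamma> \<circ> Inl) C"
  using assms(3,4)
proof (induction "Inl e :: 'e + nat" arbitrary: e rule: wf_induct_rule[OF wf_input_rel])
  case 1
  have "finite C"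
    using assms(1) finite_E by (rule finite_subset)
  have "proj_vec (msg_coords s) (coding_vec \<gamma> i) \<in> span (proj_vec (msg_coords s) \<circ> coding_vec \<gamma> \<circ> Inl) C"
    if i: "i \<in> inputs e" for i
  proof (cases i)
    case (Inl e')
    then have e': "e' \<in> E" "head e' = tail e"
      using i by (auto simp: Inl_in_inputs)
    show ?thesis
    proof (cases "e' \<in> C")
      case True
      then show ?thesis
        using span_base[of e' C "proj_vec (msg_coords s) \<circ> coding_vec \<gamma> \<circ> Inl"] Inl by simp
    next
      case False
      then have "(tail e', head e') \<in> edge_rel (E - C) tail head"
        using e'(1) unfolding edge_rel_def by blast
      then have "(s, tail e') \<notin> (edge_rel (E - C) tail head)\<^sup>*"
        using 1(3) e'(2) by (metis rtrancl.rtrancl_into_rtrancl)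
      then show ?thesis
        using 1(1)[of e'] e'(1) i Inl unfolding input_rel_def by auto
    qed
  next
    case (Inr c)
    then have "tail e \<in> {s1, s2}" "c \<in> msg_coords (tail e)"
      using i by (auto simp: Inr_in_inputs)
    moreover have "tail e \<noteq> s"
      using 1(3) by auto
    ultimately have "c \<notin> msg_coords s"
      using msg_coords_disjoint by blast
    then have "proj_vec (msg_coords s) (coding_vec \<gamma> i) = 0"
      unfolding Inr by (auto simp: proj_vec_def unitv_def)
    then show ?thesis
      by (simp add: span_zero)
  qed
  then show ?case
    unfolding coding_vec_Inl proj_vec_sum proj_vec_scale_vec
    by (intro span_sum[OF \<open>finite C\<close>] span_scale_vec)
qed

lemma card_proj_received_span_le:
  assumes "sx \<in> {s1, s2}" "t \<noteq> sx"
  shows "card (proj_vec (msg_coords sx) ` span (coding_vec \<gamma> \<circ> Inl) {e\<in>E. head e = t})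
    \<le> 2 ^ min (card (msg_coords sx)) (mincut E tail head {sx} {t})"
proof -
  let ?Jx = "msg_coords sx" and ?P = "proj_vec (msg_coords sx) ` span (coding_vec \<gamma> \<circ> Inl) {e\<in>E. head e = t}"
  obtain C where C: "is_cut E tail head {sx} {t} C" "card C = mincut E tail head {sx} {t}"
    using mincut_attained[OF finite_E, of "{sx}" "{t}"] assms(2) by auto
  then have "C \<subseteq> E" "finite C"
    using finite_E unfolding is_cut_def by (auto intro: finite_subset)
  have "?P \<subseteq> span (proj_vec ?Jx \<circ> coding_vec \<gamma> \<circ> Inl) C"
  proof
    fix x assume "x \<in> ?P"
    then obtain B where B: "B \<subseteq> {e\<in>E. head e = t}" "x = proj_vec ?Jx (sum (coding_vec \<gamma> \<circ> Inl) B)"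
      unfolding span_def by blast
    have "(sx, tail f) \<notin> (edge_rel (E - C) tail head)\<^sup>*" if "f \<in> B" "f \<notin> C" for f
    proof
      assume "(sx, tail f) \<in> (edge_rel (E - C) tail head)\<^sup>*"
      moreover have "(tail f, head f) \<in> edge_rel (E - C) tail head"
        using that B(1) unfolding edge_rel_def by blast
      ultimately have "(sx, t) \<in> (edge_rel (E - C) tail head)\<^sup>*"
        using that(1) B(1) by (auto intro: rtrancl_into_rtrancl)
      then show False
        using C(1) unfolding is_cut_def by blast
    qed
    then have "proj_vec ?Jx ((coding_vec \<gamma> \<circ> Inl) f) \<in> span (proj_vec ?Jx \<circ> coding_vec \<gamma> \<circ> Inl) C"
      if "f \<in> B" for f
      using that B(1) span_base[of f C "proj_vec ?Jx \<circ> coding_vec \<gamma> \<circ> Inl"] \<open>C \<subseteq> E\<close> assms(1)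
      by (cases "f \<in> C") (auto intro: proj_coding_vec_in_cut_span)
    then show "x \<in> span (proj_vec ?Jx \<circ> coding_vec \<gamma> \<circ> Inl) C"
      unfolding B(2) proj_vec_sum by (intro span_sum[OF \<open>finite C\<close>])
  qed
  then have "card ?P \<le> 2 ^ card C"
    using card_span_le[OF \<open>finite C\<close>] card_mono[OF finite_span[OF \<open>finite C\<close>]] by (meson order_trans)
  moreover have "?P \<subseteq> span unitv ?Jx"
    using finite_msg_coords by (auto simp: proj_vec_def intro: in_span_unitv)
  then have "card ?P \<le> 2 ^ card ?Jx"
    using card_span_le[OF finite_msg_coords] card_mono[OF finite_span[OF finite_msg_coords]] by (meson order_trans)
  ultimately show ?thesis
    using C(2) by (simp add: min_def)
qed

lemma received_span_contains_message:
  assumes r: "routing F p t" and "t \<in> {t1, t2}"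
    and indep: "indep (coding_vec \<gamma>) (frontier F p E)"
    and sources: "{so, sx} = {s1, s2}" "so \<noteq> sx"
    and enough: "card (msg_coords so) + min (card (msg_coords sx)) (mincut E tail head {sx} {t})
      \<le> card {e\<in>F. head e = t}"
  shows "span unitv (msg_coords so) \<subseteq> span (coding_vec \<gamma> \<circ> Inl) {e\<in>E. head e = t}"
proof (rule span_unitv_subset_span_by_counting)
  have no_out: "tail e \<noteq> t" if "e \<in> E" for e
    using edge_ends[OF that] \<open>t \<in> {t1, t2}\<close> by auto
  then show "indep (coding_vec \<gamma> \<circ> Inl) {e\<in>F. head e = t}"
    using indep frontier_E[OF r] by (simp add: indep_reindex)
  show "(coding_vec \<gamma> \<circ> Inl) f k = 0"
    if "f \<in> {e\<in>E. head e = t}" "k \<notin> msg_coords so" "k \<notin> msg_coords sx" for f k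
    using that sources coding_vec_outside_msg_coords[of f k] by (auto simp: doubleton_eq_iff)
  show "card (proj_vec (msg_coords sx) ` span (coding_vec \<gamma> \<circ> Inl) {e\<in>E. head e = t})
    \<le> 2 ^ min (card (msg_coords sx)) (mincut E tail head {sx} {t})"
    using sources \<open>t \<in> {t1, t2}\<close> distinct_ends by (intro card_proj_received_span_le) auto
  show "{e\<in>F. head e = t} \<subseteq> {e\<in>E. head e = t}"
    using r unfolding routing_def by auto
qed (use enough finite_E finite_msg_coords in auto)
definition msg_vec :: "(nat \<Rightarrow> nat) \<Rightarrow> (nat \<Rightarrow> nat) \<Rightarrow> vec" where
  "msg_vec x1 x2 k =
     (if k < R1 then bit_of_nat (x1 k) else if k < R1 + R2 then bit_of_nat (x2 (k - R1)) else 0)"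

lemma msg_vec_coord:
  "s \<in> {s1, s2} \<Longrightarrow> j < msg_len s \<Longrightarrow> msg_vec x1 x2 (coord s j) = bit_of_nat ((if s = s1 then x1 else x2) j)"
  using distinct_ends unfolding msg_vec_def coord_def msg_len_def by auto

definition code_alpha :: "(('e + nat) \<Rightarrow> 'e \<Rightarrow> bit) \<Rightarrow> 'e \<Rightarrow> nat \<Rightarrow> nat" where
  "code_alpha \<gamma> e j = nat_of_bit (\<gamma> (Inr (coord (tail e) j)) e)"

definition code_beta :: "(('e + nat) \<Rightarrow> 'e \<Rightarrow> bit) \<Rightarrow> 'e \<Rightarrow> 'e \<Rightarrow> nat" where
  "code_beta \<gamma> e' e = nat_of_bit (\<gamma> (Inl e') e)"

lemma source_edge_symbol:
  assumes x: "x1 \<in> {..<R1} \<rightarrow> {0, 1}" "x2 \<in> {..<R2} \<rightarrow> {0, 1}"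
    and y: "code_edge_symbols GF2 E tail head s1 s2 R1 R2 (code_alpha \<gamma>) (code_beta \<gamma>) x1 x2 y"
    and e: "e \<in> E" "tail e \<in> {s1, s2}"
  shows "bit_of_nat (y e) = (\<Sum>i\<in>inputs e. \<gamma> i e * inner_prod (R1 + R2) (coding_vec \<gamma> i) (msg_vec x1 x2))"
proof -
  let ?s = "tail e" and ?z = "msg_vec x1 x2" and ?n = "R1 + R2"
  define x where "x = (if tail e = s1 then x1 else x2)"
  have x01: "x j \<in> {0, 1}" if "j < msg_len ?s" for j
    using x that unfolding x_def msg_len_def by auto
  have "y e = finsum GF2 (\<lambda>j. code_alpha \<gamma> e j * x j) {..<msg_len ?s}"
    using y e distinct_ends unfolding code_edge_symbols_def msg_len_def x_def by auto
  moreover have "(\<lambda>j. code_alpha \<gamma> e j * x j) \<in> {..<msg_len ?s} \<rightarrow> {0, 1}"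
    using x01 by (auto simp: code_alpha_def nat_of_bit_def)
  ultimately have "bit_of_nat (y e) = (\<Sum>j<msg_len ?s. bit_of_nat (code_alpha \<gamma> e j * x j))"
    by (simp add: bit_of_nat_finsum_GF2)
  also have "\<dots> = (\<Sum>j<msg_len ?s. \<gamma> (Inr (coord ?s j)) e * bit_of_nat (x j))"
    using bit_of_nat_mult[OF nat_of_bit_in_carrier x01] by (intro sum.cong) (simp_all add: code_alpha_def)
  also have "\<dots> = (\<Sum>j<msg_len ?s. \<gamma> (Inr (coord ?s j)) e * inner_prod ?n (unitv (coord ?s j)) ?z)"
    using e(2) by (simp add: inner_prod_unitv coord_less msg_vec_coord x_def)
  also have "\<dots> = (\<Sum>i\<in>(Inr \<circ> coord ?s) ` {..<msg_len ?s}. \<gamma> i e * inner_prod ?n (coding_vec \<gamma> i) ?z)"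
    using inj_coord by (simp add: sum.reindex inj_on_def)
  also have "(Inr \<circ> coord ?s) ` {..<msg_len ?s} = inputs e"
    using e by (simp add: inputs_def msg_coords_eq_image image_comp)
  finally show ?thesis .
qed

lemma edge_symbol_eq_inner_prod:
  assumes x: "x1 \<in> {..<R1} \<rightarrow> {0, 1}" "x2 \<in> {..<R2} \<rightarrow> {0, 1}"
    and y: "code_edge_symbols GF2 E tail head s1 s2 R1 R2 (code_alpha \<gamma>) (code_beta \<gamma>) x1 x2 y"
    and "e \<in> E"
  shows "bit_of_nat (y e) = inner_prod (R1 + R2) (coding_vec \<gamma> (Inl e)) (msg_vec x1 x2)"
  using \<open>e \<in> E\<close>
proof (induction "Inl e :: 'e + nat" arbitrary: e rule: wf_induct_rule[OF wf_input_rel])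
  case 1
  let ?z = "msg_vec x1 x2" and ?n = "R1 + R2"
  have "bit_of_nat (y e) = (\<Sum>i\<in>inputs e. \<gamma> i e * inner_prod ?n (coding_vec \<gamma> i) ?z)"
  proof (cases "tail e \<in> {s1, s2}")
    case True
    then show ?thesis
      using source_edge_symbol[OF x y 1(2)] by blast
  next
    case False
    let ?In = "{e'\<in>E. head e' = tail e}"
    have y01: "y e' \<in> {0, 1}" if "e' \<in> E" for e'
      using y that unfolding code_edge_symbols_def by simp
    have "y e = finsum GF2 (\<lambda>e'. code_beta \<gamma> e' e * y e') ?In"
      using y 1(2) False unfolding code_edge_symbols_def by auto
    moreover have "(\<lambda>e'. code_beta \<gamma> e' e * y e') \<in> ?In \<rightarrow> {0, 1}"
      using y01 by (auto simp: code_beta_def nat_of_bit_def)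
    ultimately have "bit_of_nat (y e) = (\<Sum>e'\<in>?In. bit_of_nat (code_beta \<gamma> e' e * y e'))"
      using finite_E by (simp add: bit_of_nat_finsum_GF2)
    also have "\<dots> = (\<Sum>e'\<in>?In. \<gamma> (Inl e') e * bit_of_nat (y e'))"
      using bit_of_nat_mult[OF nat_of_bit_in_carrier y01] by (intro sum.cong) (simp_all add: code_beta_def)
    also have "\<dots> = (\<Sum>e'\<in>?In. \<gamma> (Inl e') e * inner_prod ?n (coding_vec \<gamma> (Inl e')) ?z)"
      using 1(1) 1(2) False unfolding input_rel_def by (intro sum.cong) (auto simp: Inl_in_inputs)
    also have "\<dots> = (\<Sum>i\<in>Inl ` ?In. \<gamma> i e * inner_prod ?n (coding_vec \<gamma> i) ?z)"
      by (simp add: sum.reindex)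
    also have "Inl ` ?In = inputs e"
      using False 1(2) by (simp add: inputs_def)
    finally show ?thesis .
  qed
  then show ?case
    by (simp add: coding_vec_Inl inner_prod_sum inner_prod_scale_vec)
qed
lemma message_recovered:
  assumes "s \<in> {s1, s2}" and received: "span unitv (msg_coords s) \<subseteq> span (coding_vec \<gamma> \<circ> Inl) {e\<in>E. head e = t}"
    and x: "x1 \<in> {..<R1} \<rightarrow> {0, 1}" "x2 \<in> {..<R2} \<rightarrow> {0, 1}" "x1' \<in> {..<R1} \<rightarrow> {0, 1}" "x2' \<in> {..<R2} \<rightarrow> {0, 1}"
    and y: "code_edge_symbols GF2 E tail head s1 s2 R1 R2 (code_alpha \<gamma>) (code_beta \<gamma>) x1 x2 y"
      "code_edge_symbols GF2 E tail head s1 s2 R1 R2 (code_alpha \<gamma>) (code_beta \<gamma>) x1' x2' y'"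
    and agree: "\<forall>e\<in>E. head e = t \<longrightarrow> y e = y' e"
    and "j < msg_len s"
  shows "(if s = s1 then x1 else x2) j = (if s = s1 then x1' else x2') j"
proof -
  have "coord s j \<in> msg_coords s"
    using msg_coords_eq_image[OF \<open>s \<in> {s1, s2}\<close>] \<open>j < msg_len s\<close> by simp
  then have "unitv (coord s j) \<in> span (coding_vec \<gamma> \<circ> Inl) {e\<in>E. head e = t}"
    using received span_base[of "coord s j" "msg_coords s" unitv] by blast
  moreover have "inner_prod (R1 + R2) ((coding_vec \<gamma> \<circ> Inl) f) (msg_vec x1 x2)
      = inner_prod (R1 + R2) ((coding_vec \<gamma> \<circ> Inl) f) (msg_vec x1' x2')" if "f \<in> {e\<in>E. head e = t}" for f
    using that agree edge_symbol_eq_inner_prod[OF x(1,2) y(1), of f] edge_symbol_eq_inner_prod[OF x(3,4) y(2), of f]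
    by simp
  ultimately have "msg_vec x1 x2 (coord s j) = msg_vec x1' x2' (coord s j)"
    using coord_less[OF \<open>s \<in> {s1, s2}\<close> \<open>j < msg_len s\<close>] by (rule coordinate_determined)
  moreover have "(if s = s1 then x1 else x2) j \<in> {0, 1}" "(if s = s1 then x1' else x2') j \<in> {0, 1}"
    using x \<open>j < msg_len s\<close> unfolding msg_len_def by auto
  ultimately show ?thesis
    using msg_vec_coord[OF \<open>s \<in> {s1, s2}\<close> \<open>j < msg_len s\<close>] by (simp add: bit_of_nat_inject)
qed

lemma linear_solution_of_received_spans:
  assumes "span unitv (msg_coords s1) \<subseteq> span (coding_vec \<gamma> \<circ> Inl) {e\<in>E. head e = t1}"
    and "span unitv (msg_coords s2) \<subseteq> span (coding_vec \<gamma> \<circ> Inl) {e\<in>E. head e = t2}"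
  shows "linear_solution GF2 E tail head s1 s2 t1 t2 R1 R2"
  unfolding linear_solution_def
proof (intro exI[of _ "code_alpha \<gamma>"] exI[of _ "code_beta \<gamma>"] conjI allI impI, goal_cases)
  case (3 x1 x2 y x1' x2' y' j)
  moreover have "msg_len s1 = R1"
    by (simp add: msg_len_def)
  ultimately show ?case
    using message_recovered[of s1 \<gamma> t1 x1 x2 x1' x2' y y' j] assms(1) by simp
next
  case (4 x1 x2 y x1' x2' y' j)
  moreover have "msg_len s2 = R2" "s2 \<noteq> s1"
    using distinct_ends by (auto simp: msg_len_def)
  ultimately show ?case
    using message_recovered[of s2 \<gamma> t2 x1 x2 x1' x2' y y' j] assms(2) by simp
qed (simp_all add: code_alpha_def code_beta_def nat_of_bit_def)

lemma routing_to_terminal: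
  assumes "t \<in> {t1, t2}" and sources: "{so, sx} = {s1, s2}" "so \<noteq> sx"
    and rate: "card (msg_coords so) \<le> mincut E tail head {s1, s2} {t} - mincut E tail head {sx} {t}"
  obtains F p where "routing F p t"
    "card (msg_coords so) + min (card (msg_coords sx)) (mincut E tail head {sx} {t}) \<le> card {e\<in>F. head e = t}"
proof -
  have "t \<notin> {s1, s2}" and no_out: "\<And>e. e \<in> E \<Longrightarrow> tail e \<noteq> t"
    using \<open>t \<in> {t1, t2}\<close> distinct_ends edge_ends by auto
  interpret flow_network E tail head so sx t "\<lambda>s. card (msg_coords s)"
    using sources \<open>t \<notin> {s1, s2}\<close> finite_E edge_ends no_out by unfold_locales (auto simp: doubleton_eq_iff)
  let ?m = "\<lambda>S. mincut E tail head S {t}"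
  obtain F where F: "is_flow F" and bound: "min (min (card (msg_coords so) + card (msg_coords sx))
      (card (msg_coords so) + ?m {sx})) (min (card (msg_coords sx) + ?m {so}) (?m {so, sx})) \<le> inflow F t"
    by (rule max_flow_min_cut)
  have "?m {so, sx} \<le> ?m {so} + ?m {sx}"
    using \<open>t \<notin> {s1, s2}\<close> sources by (intro mincut_two_sources_le[OF finite_E]) auto
  moreover have "?m {sx} \<le> ?m {so, sx}"
    using \<open>t \<notin> {s1, s2}\<close> sources by (intro mincut_mono_sources[OF finite_E]) auto
  moreover have "card (msg_coords so) \<le> ?m {so, sx} - ?m {sx}"
    using rate unfolding sources .
  ultimately have "card (msg_coords so) + min (card (msg_coords sx)) (?m {sx}) \<le> min (min (card (msg_coords so) + card (msg_coords sx))
      (card (msg_coords so) + ?m {sx})) (min (card (msg_coords sx) + ?m {so}) (?m {so, sx}))"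
    by (simp add: min_def)
  then have "card (msg_coords so) + min (card (msg_coords sx)) (?m {sx}) \<le> inflow F t"
    using bound by (rule order_trans)
  moreover obtain p where "routing F p t"
  proof (rule routing_exists[OF _ no_out])
    show "F \<subseteq> E" "\<And>v. v \<notin> {s1, s2, t} \<Longrightarrow> card {e\<in>F. head e = v} = card {e\<in>F. tail e = v}"
      "\<And>s. s \<in> {s1, s2} \<Longrightarrow> card {e\<in>F. tail e = s} \<le> card (msg_coords s)"
      using F sources unfolding is_flow_def inflow_def outflow_def by auto
  qed
  ultimately show ?thesis
    using that unfolding inflow_def by blast
qed

end

theorem theorem2:
  fixes E :: "'e set" and tail head :: "'e \<Rightarrow> 'v" and s1 s2 t1 t2 :: 'v and R1 R2 :: nat
  assumes "two_unicast_net E tail head s1 s2 t1 t2"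
    and "mincut E tail head {s1} {t2} + mincut E tail head {s2} {t1}
           \<le> min (mincut E tail head {s1, s2} {t1}) (mincut E tail head {s1, s2} {t2})"
    and "R1 \<le> mincut E tail head {s1, s2} {t1} - mincut E tail head {s2} {t1}"
    and "R2 \<le> mincut E tail head {s1, s2} {t2} - mincut E tail head {s1} {t2}"
  shows "achievable E tail head s1 s2 t1 t2 R1 R2"
proof -
  interpret two_unicast E tail head s1 s2 t1 t2 R1 R2
    by unfold_locales (rule assms(1))
  have sources: "{s2, s1} = {s1, s2}" "s1 \<noteq> s2" "s2 \<noteq> s1"
    using distinct_ends by auto
  obtain F1 p1 where r1: "routing F1 p1 t1" and flow1: "card (msg_coords s1)
      + min (card (msg_coords s2)) (mincut E tail head {s2} {t1}) \<le> card {e\<in>F1. head e = t1}"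
    using routing_to_terminal[of t1 s1 s2] assms(3) sources by (auto simp: card_msg_coords)
  obtain F2 p2 where r2: "routing F2 p2 t2" and flow2: "card (msg_coords s2)
      + min (card (msg_coords s1)) (mincut E tail head {s1} {t2}) \<le> card {e\<in>F2. head e = t2}"
    using routing_to_terminal[of t2 s2 s1] assms(4) sources by (auto simp: card_msg_coords)
  obtain \<gamma> where "indep (coding_vec \<gamma>) (frontier F1 p1 E)" "indep (coding_vec \<gamma>) (frontier F2 p2 E)"
    using exists_code_indep_frontiers[OF r1 r2] .
  then have "linear_solution GF2 E tail head s1 s2 t1 t2 R1 R2"
    using received_span_contains_message[OF r1 _ _ refl sources(2) flow1]
      received_span_contains_message[OF r2 _ _ sources(1,3) flow2]
    by (intro linear_solution_of_received_spans) auto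
  then show ?thesis
    unfolding achievable_def using field_GF2 by auto
qed

end
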